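(* Let $G$ be a $(k+1)$-critical hypergraph for some integer $k\ge2$. If $G$ has exactly one high vertex, then either $G$ has a separating vertex set of size $2$, or $k=2$ and $G$ is a hyperwheel, or $k=3$ and $G$ is an odd wheel.
   Context: A hypergraph is a pair $G=(V,E)$ of finite sets with $E\subseteq 2^V$ and $|e|\ge2$ for all $e\in E$; edges of size 2 are ordinary. A coloring requires every edge to contain two vertices of different colors; $\chi$ is the chromatic number. $G$ is $(k+1)$-critical if $\chi(G)=k+1$ but $\chi(H)\le k$ for every proper subhypergraph $H$. The degree $d_G(v)$ is the number of edges containing $v$ (every $(k+1)$-critical hypergraph has minimum degree at least $k$). In a $(k+1)$-critical hypergraph, a vertex of degree $k$ is low and a vertex of degree at least $k+1$ is high. A set $S\subseteq V(G)$ is a separating vertex set if $G$ is the union of two induced subhypergraphs $G_1,G_2$ with $V(G_1)\cap V(G_2)=S$ and $|V(G_i)|>|S|$. A hyperwheel is obtained from a single edge (of any size $\ge 2$) by adding one new vertex joined by ordinary edges to every vertex of that edge. An odd wheel is an odd cycle of ordinary edges plus a new vertex joined by ordinary edges to all cycle vertices. *)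

theory Defs
  imports Main
begin

definition hypergraph :: "'a set \<Rightarrow> 'a set set \<Rightarrow> bool" where
  "hypergraph V E \<longleftrightarrow> finite V \<and> E \<subseteq> Pow V \<and> (\<forall>e\<in>E. card e \<ge> 2)"

definition is_coloring :: "'a set \<Rightarrow> 'a set set \<Rightarrow> nat \<Rightarrow> ('a \<Rightarrow> nat) \<Rightarrow> bool" where
  "is_coloring V E k f \<longleftrightarrow> f ` V \<subseteq> {..<k} \<and> (\<forall>e\<in>E. \<exists>u\<in>e. \<exists>v\<in>e. f u \<noteq> f v)"

definition colorable :: "'a set \<Rightarrow> 'a set set \<Rightarrow> nat \<Rightarrow> bool" where
  "colorable V E k \<longleftrightarrow> (\<exists>f. is_coloring V E k f)"

definition chromatic_number :: "'a set \<Rightarrow> 'a set set \<Rightarrow> nat" where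
  "chromatic_number V E = (LEAST k. colorable V E k)"

definition subhypergraph :: "'a set \<Rightarrow> 'a set set \<Rightarrow> 'a set \<Rightarrow> 'a set set \<Rightarrow> bool" where
  "subhypergraph V' E' V E \<longleftrightarrow> hypergraph V' E' \<and> V' \<subseteq> V \<and> E' \<subseteq> E"

definition critical :: "nat \<Rightarrow> 'a set \<Rightarrow> 'a set set \<Rightarrow> bool" where
  "critical m V E \<longleftrightarrow> hypergraph V E \<and> chromatic_number V E = m \<and>
     (\<forall>V' E'. subhypergraph V' E' V E \<and> (V', E') \<noteq> (V, E) \<longrightarrow> chromatic_number V' E' < m)"

definition degree :: "'a set set \<Rightarrow> 'a \<Rightarrow> nat" where
  "degree E v = card {e\<in>E. v \<in> e}"

definition high_vertices :: "nat \<Rightarrow> 'a set \<Rightarrow> 'a set set \<Rightarrow> 'a set" where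
  "high_vertices k V E = {v\<in>V. degree E v \<ge> k + 1}"

definition separating_set :: "'a set \<Rightarrow> 'a set set \<Rightarrow> 'a set \<Rightarrow> bool" where
  "separating_set V E S \<longleftrightarrow> (\<exists>V1 V2. V1 \<subseteq> V \<and> V2 \<subseteq> V \<and> V1 \<union> V2 = V \<and> V1 \<inter> V2 = S \<and>
      card V1 > card S \<and> card V2 > card S \<and>
      E = {e\<in>E. e \<subseteq> V1} \<union> {e\<in>E. e \<subseteq> V2})"

definition hyperwheel :: "'a set \<Rightarrow> 'a set set \<Rightarrow> bool" where
  "hyperwheel V E \<longleftrightarrow> (\<exists>e w. card e \<ge> 2 \<and> finite e \<and> w \<notin> e \<and> V = insert w e \<and>
      E = insert e {{w, u} | u. u \<in> e})"

definition odd_wheel :: "'a set \<Rightarrow> 'a set set \<Rightarrow> bool" where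
  "odd_wheel V E \<longleftrightarrow> (\<exists>c w. distinct c \<and> length c \<ge> 3 \<and> odd (length c) \<and> w \<notin> set c \<and>
      V = insert w (set c) \<and>
      E = {{c ! i, c ! ((i + 1) mod length c)} | i. i < length c} \<union> {{w, c ! i} | i. i < length c})"

end

theory Submission
  imports Defs "HOL-Combinatorics.Transposition"
begin

text \<open>
  Let \<open>h\<close> be the high vertex, so that every other vertex has degree \<open>k\<close>, and suppose there is no
  separating pair. Colour greedily along an order that ends at a vertex \<open>z\<close> of degree \<open>k\<close>: every
  earlier vertex still has an uncoloured neighbour when it is coloured, and \<open>z\<close> finds a free colour if
  a precoloured pair \<open>x, y\<close> makes two of its edges repeat a colour. Since \<open>G\<close> is not
  \<open>k\<close>-colourable, the greedy order must get stuck, and then \<open>{x, y}\<close> separates \<open>G\<close>. Taking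
  \<open>x = h\<close> shows that \<open>h\<close> lies only in the ordinary edges \<open>{h, v}\<close>, one for every other vertex
  \<open>v\<close>. Hence \<open>H = G - h\<close> is \<open>(k - 1)\<close>-regular, not \<open>(k - 1)\<close>-colourable, and
  \<open>(k - 1)\<close>-colourable after deleting any edge.

  In \<open>H\<close>, Dirac's argument (recolour the two sides of a separating pair \<open>{x, y}\<close> until the
  colourings agree on \<open>x, y\<close>) rules out separating pairs of non-adjacent vertices unless \<open>k \<le> 3\<close>
  and the two vertices share no edge. With the greedy argument this makes all edges of \<open>H\<close> ordinary
  once \<open>k \<ge> 3\<close>, and Brooks' argument then excludes \<open>k \<ge> 4\<close>: the closed neighbourhood of a
  vertex would be a clique, hence all of \<open>H\<close>, which has more than \<open>k\<close> vertices. For \<open>k = 2\<close>,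
  \<open>H\<close> is a single edge and \<open>G\<close> a hyperwheel; for \<open>k = 3\<close>, \<open>H\<close> is a connected 2-regular graph
  that is not bipartite, an odd cycle, and \<open>G\<close> an odd wheel.
\<close>

definition nonmonochromatic :: "('a \<Rightarrow> nat) \<Rightarrow> 'a set \<Rightarrow> bool" where
  "nonmonochromatic f e \<longleftrightarrow> (\<exists>u\<in>e. \<exists>v\<in>e. f u \<noteq> f v)"

lemma nonmonochromatic_intro: "u \<in> e \<Longrightarrow> v \<in> e \<Longrightarrow> f u \<noteq> f v \<Longrightarrow> nonmonochromatic f e"
  unfolding nonmonochromatic_def by blast

lemma nonmonochromatic_cong:
  "(\<And>v. v \<in> e \<Longrightarrow> f v = g v) \<Longrightarrow> nonmonochromatic f e \<longleftrightarrow> nonmonochromatic g e"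
  unfolding nonmonochromatic_def by auto

lemma is_coloring_iff:
  "is_coloring V E k f \<longleftrightarrow> f ` V \<subseteq> {..<k} \<and> (\<forall>e\<in>E. nonmonochromatic f e)"
  unfolding is_coloring_def nonmonochromatic_def ..

lemma colorableI: "is_coloring V E k f \<Longrightarrow> colorable V E k"
  unfolding colorable_def by blast

lemma hypergraph_finite_edges: "hypergraph V E \<Longrightarrow> finite E"
  unfolding hypergraph_def by (meson finite_Pow_iff finite_subset)

lemma hypergraph_edge_subset: "hypergraph V E \<Longrightarrow> e \<in> E \<Longrightarrow> e \<subseteq> V"
  unfolding hypergraph_def by blast

lemma card_pair_le: "card {x, y} \<le> 2"
  by (cases "x = y") auto

lemma hypergraph_edge_not_subset_pair:
  assumes "hypergraph V E" "e \<in> E" "e \<subseteq> {x, y}"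
  shows "e = {x, y}"
proof -
  have "2 \<le> card e" using assms unfolding hypergraph_def by blast
  moreover have "card {x, y} \<le> 2" by (rule card_pair_le)
  ultimately show ?thesis
    using assms(3) card_seteq[of "{x, y}" e] by fastforce
qed

lemma hypergraph_edge_other:
  assumes "hypergraph V E" "e \<in> E"
  shows "\<exists>u\<in>e. u \<noteq> w"
proof (rule ccontr)
  assume "\<not> ?thesis"
  then have "card e \<le> card {w}" by (intro card_mono) auto
  with assms show False unfolding hypergraph_def by force
qed

lemma hypergraph_induced: "hypergraph V E \<Longrightarrow> U \<subseteq> V \<Longrightarrow> hypergraph U {e\<in>E. e \<subseteq> U}"
  unfolding hypergraph_def by (auto intro: finite_subset)

lemma hypergraph_edge_subset_hypergraph: "hypergraph V E \<Longrightarrow> E' \<subseteq> E \<Longrightarrow> hypergraph V E'"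
  unfolding hypergraph_def by blast

lemma finite_edges_at: "hypergraph V E \<Longrightarrow> finite {e\<in>E. P e}"
  by (simp add: hypergraph_finite_edges)

lemma colorable_mono: "colorable V E a \<Longrightarrow> a \<le> b \<Longrightarrow> colorable V E b"
  unfolding colorable_def is_coloring_def by (meson lessThan_subset_iff order_trans)

lemma colorable_one_imp_no_edges:
  assumes "colorable V E 1" "\<forall>e\<in>E. e \<subseteq> V"
  shows "E = {}"
proof (rule ccontr)
  assume "E \<noteq> {}"
  then obtain e where e: "e \<in> E" by blast
  obtain f where f: "is_coloring V E 1 f" using assms(1) unfolding colorable_def ..
  then obtain u v where "u \<in> e" "v \<in> e" "f u \<noteq> f v"
    using e unfolding is_coloring_iff nonmonochromatic_def by blast
  moreover have "f u < 1" "f v < 1"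
    using f assms(2) e \<open>u \<in> e\<close> \<open>v \<in> e\<close> unfolding is_coloring_iff by blast+
  ultimately show False by simp
qed

lemma colorable_card:
  assumes "hypergraph V E"
  shows "colorable V E (card V)"
proof -
  have "finite V" using assms unfolding hypergraph_def by blast
  then obtain g where g: "bij_betw g V {0..<card V}" using ex_bij_betw_finite_nat by blast
  have "\<exists>u\<in>e. \<exists>v\<in>e. g u \<noteq> g v" if e: "e \<in> E" for e
  proof -
    obtain u where u: "u \<in> e" using hypergraph_edge_other[OF assms e] by blast
    obtain v where v: "v \<in> e" "v \<noteq> u" using hypergraph_edge_other[OF assms e] by blast
    have "u \<in> V" "v \<in> V" using hypergraph_edge_subset[OF assms e] u v by auto
    then show ?thesis using g u v unfolding bij_betw_def inj_on_def by metis
  qed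
  moreover have "g ` V \<subseteq> {..<card V}" using g unfolding bij_betw_def by auto
  ultimately have "is_coloring V E (card V) g" unfolding is_coloring_def by blast
  then show ?thesis by (rule colorableI)
qed

lemma colorable_chromatic_number: "hypergraph V E \<Longrightarrow> colorable V E (chromatic_number V E)"
  unfolding chromatic_number_def using colorable_card by (rule LeastI)

lemma is_coloring_restrict:
  "is_coloring V E k f \<Longrightarrow> V' \<subseteq> V \<Longrightarrow> E' \<subseteq> E \<Longrightarrow> is_coloring V' E' k f"
  unfolding is_coloring_def by blast

lemma is_coloring_transpose:
  assumes "is_coloring V E k f" "a < k" "b < k"
  shows "is_coloring V E k (transpose a b \<circ> f)"
  unfolding is_coloring_iff
proof (intro conjI ballI)
  show "(transpose a b \<circ> f) ` V \<subseteq> {..<k}"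
    using assms unfolding is_coloring_iff by (auto simp: transpose_def)
  fix e assume "e \<in> E"
  then obtain u v where "u \<in> e" "v \<in> e" "f u \<noteq> f v"
    using assms(1) unfolding is_coloring_iff nonmonochromatic_def by blast
  then show "nonmonochromatic (transpose a b \<circ> f) e"
    by (intro nonmonochromatic_intro[of u e v]) (auto dest: transpose_eq_imp_eq)
qed

lemma is_coloring_drop_color:
  assumes "is_coloring V E k f" "\<forall>v\<in>V. f v \<noteq> c" "c < k"
  shows "is_coloring V E (k - 1) (transpose (k - 1) c \<circ> f)"
proof -
  have "is_coloring V E k (transpose (k - 1) c \<circ> f)" using assms by (intro is_coloring_transpose) auto
  moreover have "transpose (k - 1) c (f v) \<noteq> k - 1" if "v \<in> V" for v
    using assms(2) that by (auto simp: transpose_eq_iff)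
  ultimately show ?thesis unfolding is_coloring_iff by fastforce
qed

lemma is_coloring_glue:
  assumes "is_coloring V1 E1 k f1" "is_coloring V2 E2 k f2" "\<forall>v\<in>V1 \<inter> V2. f1 v = f2 v"
    and "hypergraph V1 E1" "hypergraph V2 E2" "E \<subseteq> E1 \<union> E2"
  shows "is_coloring (V1 \<union> V2) E k (\<lambda>v. if v \<in> V1 then f1 v else f2 v)" (is "is_coloring _ _ _ ?f")
  unfolding is_coloring_iff
proof (intro conjI ballI)
  show "?f ` (V1 \<union> V2) \<subseteq> {..<k}" using assms(1,2) unfolding is_coloring_iff by auto
  fix e assume "e \<in> E"
  then consider "e \<in> E1" | "e \<in> E2" using assms(6) by blast
  then show "nonmonochromatic ?f e"
  proof cases
    case 1
    then have "nonmonochromatic f1 e" "e \<subseteq> V1"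
      using assms(1,4) hypergraph_edge_subset unfolding is_coloring_iff by blast+
    then show ?thesis by (subst nonmonochromatic_cong[of e _ f1]) auto
  next
    case 2
    then have "nonmonochromatic f2 e" "e \<subseteq> V2"
      using assms(2,5) hypergraph_edge_subset unfolding is_coloring_iff by blast+
    then show ?thesis using assms(3) by (subst nonmonochromatic_cong[of e _ f2]) auto
  qed
qed

subsection \<open>Critical hypergraphs\<close>

context
  fixes V :: "'a set" and E :: "'a set set" and k :: nat
  assumes critical: "critical (k + 1) V E"
begin

lemma critical_hypergraph: "hypergraph V E"
  using critical unfolding critical_def by blast

lemma critical_not_colorable: "\<not> colorable V E k"
proof
  assume "colorable V E k"
  then have "chromatic_number V E \<le> k" unfolding chromatic_number_def by (rule Least_le)
  then show False using critical unfolding critical_def by simp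
qed

lemma critical_subhypergraph_colorable:
  assumes "subhypergraph V' E' V E" "(V', E') \<noteq> (V, E)"
  shows "colorable V' E' k"
proof -
  have "\<forall>V' E'. subhypergraph V' E' V E \<and> (V', E') \<noteq> (V, E) \<longrightarrow> chromatic_number V' E' < k + 1"
    using critical unfolding critical_def by (elim conjE)
  then have "chromatic_number V' E' < k + 1" using assms by blast
  moreover have "hypergraph V' E'" using assms(1) unfolding subhypergraph_def by blast
  ultimately show ?thesis by (auto intro: colorable_mono[OF colorable_chromatic_number])
qed

lemma critical_induced_colorable:
  assumes "U \<subset> V"
  shows "colorable U {e\<in>E. e \<subseteq> U} k"
proof (rule critical_subhypergraph_colorable)
  show "subhypergraph U {e\<in>E. e \<subseteq> U} V E"
    unfolding subhypergraph_def using hypergraph_induced[OF critical_hypergraph] assms by blast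
qed (use assms in blast)

lemma critical_delete_edge_colorable:
  assumes "e \<in> E"
  shows "colorable V (E - {e}) k"
proof (rule critical_subhypergraph_colorable)
  show "subhypergraph V (E - {e}) V E"
    unfolding subhypergraph_def using hypergraph_edge_subset_hypergraph[OF critical_hypergraph] by blast
qed (use assms in blast)

lemma critical_delete_vertex_colorable:
  assumes "v \<in> V"
  shows "colorable (V - {v}) {e\<in>E. v \<notin> e} k"
proof (rule critical_subhypergraph_colorable)
  show "subhypergraph (V - {v}) {e\<in>E. v \<notin> e} V E"
    using critical_hypergraph unfolding subhypergraph_def hypergraph_def by auto
qed (use assms in blast)

lemma critical_connected:
  assumes "A \<subseteq> V" and split: "\<forall>e\<in>E. e \<subseteq> A \<or> e \<subseteq> V - A"
  shows "A = {} \<or> A = V"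
proof (rule ccontr)
  assume "\<not> ?thesis"
  then have "A \<subset> V" "V - A \<subset> V" using assms(1) by auto
  obtain f1 where f1: "is_coloring A {e\<in>E. e \<subseteq> A} k f1"
    using critical_induced_colorable[OF \<open>A \<subset> V\<close>] unfolding colorable_def ..
  obtain f2 where f2: "is_coloring (V - A) {e\<in>E. e \<subseteq> V - A} k f2"
    using critical_induced_colorable[OF \<open>V - A \<subset> V\<close>] unfolding colorable_def ..
  have hg: "hypergraph V E" by (rule critical_hypergraph)
  have "is_coloring (A \<union> (V - A)) E k (\<lambda>v. if v \<in> A then f1 v else f2 v)"
    using split assms(1) by (intro is_coloring_glue[OF f1 f2] hypergraph_induced[OF hg]) auto
  moreover have "A \<union> (V - A) = V" using assms(1) by blast
  ultimately have "is_coloring V E k (\<lambda>v. if v \<in> A then f1 v else f2 v)" by simp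
  then show False using critical_not_colorable colorableI by blast
qed

end

subsection \<open>Blocked colours\<close>

text \<open>The colours that \<open>W\<close> cannot receive as a whole: some edge meeting \<open>W\<close> carries that
  colour on all its vertices outside \<open>W\<close>.\<close>

definition blocked_colors :: "'a set set \<Rightarrow> ('a \<Rightarrow> nat) \<Rightarrow> 'a set \<Rightarrow> nat set" where
  "blocked_colors E f W = {c. \<exists>e\<in>E. e \<inter> W \<noteq> {} \<and> (\<forall>u\<in>e - W. f u = c)}"

lemma blocked_colors_subset_image:
  assumes "\<forall>e\<in>E. \<not> e \<subseteq> W"
  shows "blocked_colors E f W \<subseteq> (\<lambda>e. f (SOME u. u \<in> e - W)) ` {e\<in>E. e \<inter> W \<noteq> {}}"
proof
  fix c assume "c \<in> blocked_colors E f W"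
  then obtain e where e: "e \<in> E" "e \<inter> W \<noteq> {}" "\<forall>u\<in>e - W. f u = c"
    unfolding blocked_colors_def by blast
  obtain u where "u \<in> e - W" using assms e(1) by blast
  then have "(SOME u. u \<in> e - W) \<in> e - W" by (rule someI)
  then have "f (SOME u. u \<in> e - W) = c" by (rule bspec[OF e(3)])
  then show "c \<in> (\<lambda>e. f (SOME u. u \<in> e - W)) ` {e\<in>E. e \<inter> W \<noteq> {}}"
    by (rule image_eqI[OF sym]) (use e in blast)
qed

lemma finite_blocked_colors:
  assumes "finite E" "\<forall>e\<in>E. \<not> e \<subseteq> W"
  shows "finite (blocked_colors E f W)"
  using assms by (intro finite_subset[OF blocked_colors_subset_image] finite_imageI) auto

lemma card_blocked_colors_le:
  assumes "finite E" "\<forall>e\<in>E. \<not> e \<subseteq> W"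
  shows "card (blocked_colors E f W) \<le> card {e\<in>E. e \<inter> W \<noteq> {}}"
proof -
  have "card (blocked_colors E f W) \<le> card ((\<lambda>e. f (SOME u. u \<in> e - W)) ` {e\<in>E. e \<inter> W \<noteq> {}})"
    using assms by (intro card_mono blocked_colors_subset_image) auto
  also have "\<dots> \<le> card {e\<in>E. e \<inter> W \<noteq> {}}" using assms(1) by (intro card_image_le) auto
  finally show ?thesis .
qed

lemma card_blocked_colors_less:
  assumes "finite E" "\<forall>e\<in>E. \<not> e \<subseteq> W" "e0 \<in> E" "e0 \<inter> W \<noteq> {}"
    and "blocked_colors E f W \<subseteq> blocked_colors (E - {e0}) f W"
  shows "card (blocked_colors E f W) < card {e\<in>E. e \<inter> W \<noteq> {}}"
proof -
  have "card (blocked_colors E f W) \<le> card (blocked_colors (E - {e0}) f W)"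
    using assms by (intro card_mono finite_blocked_colors) auto
  also have "\<dots> \<le> card {e\<in>E - {e0}. e \<inter> W \<noteq> {}}"
    using assms by (intro card_blocked_colors_le) auto
  also have "\<dots> < card {e\<in>E. e \<inter> W \<noteq> {}}"
    using assms by (intro psubset_card_mono) auto
  finally show ?thesis .
qed

lemma is_coloring_extend:
  assumes f: "is_coloring (V - W) {e\<in>E. e \<inter> W = {}} k f"
    and c: "c < k" "c \<notin> blocked_colors E f W" and no_edge_in_W: "\<forall>e\<in>E. \<not> e \<subseteq> W"
  shows "is_coloring V E k (\<lambda>v. if v \<in> W then c else f v)" (is "is_coloring V E k ?g")
  unfolding is_coloring_iff
proof (intro conjI ballI)
  have "f v < k" if "v \<in> V" "v \<notin> W" for v using f that unfolding is_coloring_iff by blast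
  then show "?g ` V \<subseteq> {..<k}" using c by auto
  fix e assume e: "e \<in> E"
  show "nonmonochromatic ?g e"
  proof (cases "e \<inter> W = {}")
    case True
    then have "nonmonochromatic f e" using f e unfolding is_coloring_iff by blast
    then show ?thesis using True by (subst nonmonochromatic_cong[of e _ f]) auto
  next
    case False
    then obtain w where w: "w \<in> e" "w \<in> W" by blast
    obtain u where u: "u \<in> e" "u \<notin> W" using no_edge_in_W e by blast
    show ?thesis
    proof (cases "\<forall>v\<in>e - W. f v = f u")
      case True
      then have "f u \<noteq> c" using c(2) e False unfolding blocked_colors_def by blast
      then show ?thesis using u w by (intro nonmonochromatic_intro[of u e w]) auto
    next
      case False
      then obtain v where "v \<in> e" "v \<notin> W" "f v \<noteq> f u" by blast
      then show ?thesis using u by (intro nonmonochromatic_intro[of u e v]) auto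
    qed
  qed
qed

lemma exists_color_not_in:
  assumes "finite F" "card F < (k::nat)"
  shows "\<exists>c<k. c \<notin> F"
proof (rule ccontr)
  assume "\<not> ?thesis"
  then have "{..<k} \<subseteq> F" by auto
  then have "card {..<k} \<le> card F" by (rule card_mono[OF assms(1)])
  with assms(2) show False by simp
qed

lemma hypergraph_no_edge_in_vertex: "hypergraph V E \<Longrightarrow> \<forall>e\<in>E. \<not> e \<subseteq> {w}"
  using hypergraph_edge_other by (metis singletonD subsetD)

lemma card_blocked_colors_le_degree:
  assumes "hypergraph V E"
  shows "card (blocked_colors E f {w}) \<le> degree E w"
  using card_blocked_colors_le[OF hypergraph_finite_edges hypergraph_no_edge_in_vertex, OF assms assms]
  unfolding degree_def by simp

lemma card_blocked_colors_less_degree: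
  assumes "hypergraph V E" "e0 \<in> E" "w \<in> e0"
    and "blocked_colors E f {w} \<subseteq> blocked_colors (E - {e0}) f {w}"
  shows "card (blocked_colors E f {w}) < degree E w"
  using card_blocked_colors_less[OF hypergraph_finite_edges hypergraph_no_edge_in_vertex, OF assms(1,1)]
    assms(2-) unfolding degree_def by simp

lemma card_blocked_colors_less_degree_if_nonmonochromatic:
  assumes "hypergraph V E" "e0 \<in> E" "w \<in> e0" "nonmonochromatic f (e0 - {w})"
  shows "card (blocked_colors E f {w}) < degree E w"
proof (rule card_blocked_colors_less_degree[OF assms(1-3)], rule subsetI)
  fix c assume "c \<in> blocked_colors E f {w}"
  then obtain e where e: "e \<in> E" "e \<inter> {w} \<noteq> {}" "\<forall>u\<in>e - {w}. f u = c"
    unfolding blocked_colors_def by blast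
  have "e \<noteq> e0" using assms(4) e(3) unfolding nonmonochromatic_def by auto
  then show "c \<in> blocked_colors (E - {e0}) f {w}" using e unfolding blocked_colors_def by blast
qed

lemma card_blocked_colors_less_degree_if_repeated:
  assumes hg: "hypergraph V E" and e: "e1 \<in> E" "e2 \<in> E" "e1 \<noteq> e2" "w \<in> e1" "w \<in> e2"
    and xy: "x \<in> e1 - {w}" "y \<in> e2 - {w}" "f x = f y"
  shows "card (blocked_colors E f {w}) < degree E w"
proof (cases "nonmonochromatic f (e1 - {w})")
  case True
  then show ?thesis by (rule card_blocked_colors_less_degree_if_nonmonochromatic[OF hg e(1,4)])
next
  case False
  then have "\<forall>u\<in>e1 - {w}. f u = f x" using xy(1) unfolding nonmonochromatic_def by blast
  then have e1_mono: "\<forall>u\<in>e1 - {w}. f u = f y" using xy(3) by simp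
  show ?thesis
  proof (rule card_blocked_colors_less_degree[OF hg e(2,5)], rule subsetI)
    fix c assume "c \<in> blocked_colors E f {w}"
    then obtain e where e': "e \<in> E" "e \<inter> {w} \<noteq> {}" "\<forall>u\<in>e - {w}. f u = c"
      unfolding blocked_colors_def by blast
    show "c \<in> blocked_colors (E - {e2}) f {w}"
    proof (cases "e = e2")
      case True
      then have "\<forall>u\<in>e1 - {w}. f u = c" using e1_mono e'(3) xy(2) by simp
      then show ?thesis using e unfolding blocked_colors_def by blast
    next
      case False
      then show ?thesis using e' unfolding blocked_colors_def by blast
    qed
  qed
qed

lemma finite_blocked_colors_vertex: "hypergraph V E \<Longrightarrow> finite (blocked_colors E f {w})"
  by (rule finite_blocked_colors[OF hypergraph_finite_edges hypergraph_no_edge_in_vertex])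

lemma colorable_extend_vertex:
  assumes hg: "hypergraph V E" and f: "is_coloring (V - {w}) {e\<in>E. w \<notin> e} k f"
    and free: "card (blocked_colors E f {w}) < k"
  shows "colorable V E k"
proof -
  obtain c where "c < k" "c \<notin> blocked_colors E f {w}"
    using exists_color_not_in[OF finite_blocked_colors_vertex[OF hg] free] by blast
  then have "is_coloring V E k (\<lambda>v. if v \<in> {w} then c else f v)"
    using f hypergraph_no_edge_in_vertex[OF hg] by (intro is_coloring_extend) auto
  then show ?thesis by (rule colorableI)
qed

context
  fixes V :: "'a set" and E :: "'a set set" and k :: nat
  assumes critical: "critical (k + 1) V E"
begin

lemma critical_blocked_colors:
  assumes "is_coloring (V - {v}) {e\<in>E. v \<notin> e} k f"
  shows "k \<le> card (blocked_colors E f {v})"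
  using colorable_extend_vertex[OF critical_hypergraph[OF critical] assms]
    critical_not_colorable[OF critical] by linarith

lemma critical_vertex_coloring:
  assumes "v \<in> V"
  obtains f where "is_coloring (V - {v}) {e\<in>E. v \<notin> e} k f"
  using critical_delete_vertex_colorable[OF critical assms] unfolding colorable_def by blast

lemma critical_min_degree:
  assumes "v \<in> V"
  shows "k \<le> degree E v"
proof -
  obtain f where "is_coloring (V - {v}) {e\<in>E. v \<notin> e} k f"
    using critical_vertex_coloring[OF assms] .
  then show ?thesis
    using critical_blocked_colors card_blocked_colors_le_degree[OF critical_hypergraph[OF critical]]
    by (meson order_trans)
qed

text \<open>A second common vertex would repeat a colour among the neighbours of \<open>v\<close>, leaving a colour
  free for \<open>v\<close>.\<close>

lemma critical_low_vertex_edges_meet: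
  assumes "v \<in> V" "degree E v \<le> k" "e1 \<in> E" "e2 \<in> E" "e1 \<noteq> e2" "v \<in> e1" "v \<in> e2"
  shows "e1 \<inter> e2 = {v}"
proof (rule ccontr)
  assume "e1 \<inter> e2 \<noteq> {v}"
  then obtain u where u: "u \<in> e1 - {v}" "u \<in> e2 - {v}" using assms by blast
  obtain f where f: "is_coloring (V - {v}) {e\<in>E. v \<notin> e} k f"
    using critical_vertex_coloring[OF assms(1)] .
  have "card (blocked_colors E f {v}) < degree E v"
    using card_blocked_colors_less_degree_if_repeated[OF critical_hypergraph[OF critical] assms(3-7) u]
    by simp
  then show False using critical_blocked_colors[OF f] assms(2) by linarith
qed

end

subsection \<open>Greedy colouring\<close>

inductive grown_from :: "'a set \<Rightarrow> 'a set set \<Rightarrow> 'a set \<Rightarrow> 'a \<Rightarrow> 'a set \<Rightarrow> bool"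
  for V E X z where
  base: "grown_from V E X z {z}"
| step: "grown_from V E X z U \<Longrightarrow> w \<in> V - X - U \<Longrightarrow> e \<in> E \<Longrightarrow> w \<in> e \<Longrightarrow> e \<inter> U \<noteq> {}
    \<Longrightarrow> grown_from V E X z (insert w U)"

lemma grown_from_subset: "grown_from V E X z U \<Longrightarrow> z \<in> V - X \<Longrightarrow> z \<in> U \<and> U \<subseteq> V - X"
  by (induction rule: grown_from.induct) auto

text \<open>Colouring the uncoloured vertices of a grown set in the reverse order of growth, every vertex
  but \<open>z\<close> has an edge to a still uncoloured vertex, hence fewer than its degree blocked colours.\<close>

lemma grown_from_colorable:
  assumes "grown_from V E X z U" and hg: "hypergraph V E" and z: "z \<in> V"
    and low: "\<forall>w\<in>V - X. degree E w \<le> k"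
    and z_free: "\<And>g. \<forall>v\<in>X. g v = f0 v \<Longrightarrow> card (blocked_colors E g {z}) < k"
    and "is_coloring (V - U) {e\<in>E. e \<inter> U = {}} k f" "\<forall>v\<in>X. f v = f0 v"
  shows "colorable V E k"
  using assms(1,6,7)
proof (induction arbitrary: f rule: grown_from.induct)
  case base
  have "{e\<in>E. e \<inter> {z} = {}} = {e\<in>E. z \<notin> e}" by auto
  then show ?case
    using colorable_extend_vertex[OF hg _ z_free[OF base.prems(2)]] base.prems(1) by simp
next
  case (step U w e)
  let ?E = "{e\<in>E. e \<inter> U = {}}"
  have hg': "hypergraph (V - U) ?E" using hg unfolding hypergraph_def by auto
  have "card (blocked_colors ?E f {w}) \<le> degree ?E w"
    by (rule card_blocked_colors_le_degree[OF hg'])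
  also have "\<dots> < degree E w"
  proof -
    have fin: "finite {e'\<in>E. w \<in> e'}" by (rule finite_edges_at[OF hg])
    have "card {e'\<in>?E. w \<in> e'} \<le> card ({e'\<in>E. w \<in> e'} - {e})"
      using fin step.hyps by (intro card_mono) auto
    also have "\<dots> < card {e'\<in>E. w \<in> e'}" using fin step.hyps by (intro card_Diff1_less) auto
    finally show ?thesis unfolding degree_def .
  qed
  also have "\<dots> \<le> k" using low step.hyps by blast
  finally have "card (blocked_colors ?E f {w}) < k" .
  then obtain c where c: "c < k" "c \<notin> blocked_colors ?E f {w}"
    using exists_color_not_in[OF finite_blocked_colors_vertex[OF hg']] by blast
  have "{e'\<in>?E. w \<notin> e'} = {e'\<in>E. e' \<inter> insert w U = {}}" "V - U - {w} = V - insert w U" by auto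
  then have "is_coloring (V - U) ?E k (\<lambda>v. if v \<in> {w} then c else f v)"
    using step.prems(1) c hypergraph_no_edge_in_vertex[OF hg'] by (intro is_coloring_extend) auto
  moreover have "\<forall>v\<in>X. (if v \<in> {w} then c else f v) = f0 v" using step.prems(2) step.hyps by auto
  ultimately show ?case by (rule step.IH)
qed

lemma colorable_or_split:
  assumes hg: "hypergraph V E" and X: "X \<subseteq> V" and z: "z \<in> V - X"
    and f0: "is_coloring X {e\<in>E. e \<subseteq> X} k f0"
    and low: "\<forall>w\<in>V - X. degree E w \<le> k"
    and z_free: "\<And>g. \<forall>v\<in>X. g v = f0 v \<Longrightarrow> card (blocked_colors E g {z}) < k"
  shows "colorable V E k \<or> (\<exists>U. z \<in> U \<and> U \<subset> V - X \<and> (\<forall>e\<in>E. e \<subseteq> U \<union> X \<or> e \<subseteq> V - U))"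
proof -
  have finite_V: "finite V" using hg unfolding hypergraph_def by blast
  have "card U < Suc (card V)" if "grown_from V E X z U" for U
  proof -
    have "U \<subseteq> V" using grown_from_subset[OF that z] by blast
    then show ?thesis using card_mono[OF finite_V] by (simp add: le_imp_less_Suc)
  qed
  then obtain U where U: "grown_from V E X z U" and max: "\<forall>U'. grown_from V E X z U' \<longrightarrow> card U' \<le> card U"
    using ex_has_greatest_nat[of "grown_from V E X z" "{z}" card, OF grown_from.base] by blast
  have U_sub: "z \<in> U" "U \<subseteq> V - X" using grown_from_subset[OF U z] by auto
  have split: "e \<subseteq> U \<union> X \<or> e \<subseteq> V - U" if e: "e \<in> E" for e
  proof (rule ccontr)
    assume "\<not> ?thesis"
    then obtain u w where uw: "u \<in> e \<inter> U" "w \<in> e" "w \<notin> U \<union> X"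
      using hypergraph_edge_subset[OF hg e] by blast
    have "w \<in> V - X - U" using uw hypergraph_edge_subset[OF hg e] by blast
    then have "grown_from V E X z (insert w U)" using grown_from.step[OF U _ e uw(2)] uw(1) by blast
    then have "card (insert w U) \<le> card U" using max by blast
    moreover have "finite U" using U_sub finite_V finite_subset by blast
    ultimately show False using uw(3) by simp
  qed
  show ?thesis
  proof (cases "U = V - X")
    case True
    have "V - U = X" "{e\<in>E. e \<inter> U = {}} = {e\<in>E. e \<subseteq> X}"
      using True X hypergraph_edge_subset[OF hg] by blast+
    then have "is_coloring (V - U) {e\<in>E. e \<inter> U = {}} k f0" using f0 by simp
    then have "colorable V E k"
      using grown_from_colorable[OF U hg _ low z_free] z by blast
    then show ?thesis ..
  next
    case False
    then show ?thesis using U_sub split by blast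
  qed
qed

lemma separating_set_of_split:
  assumes hg: "hypergraph V E" and "X \<subseteq> V" "U \<subseteq> V - X" "U \<noteq> {}" "U \<noteq> V - X"
    and split: "\<forall>e\<in>E. e \<subseteq> U \<union> X \<or> e \<subseteq> V - U"
  shows "separating_set V E X"
  unfolding separating_set_def
proof (intro exI conjI)
  have finite_V: "finite V" using hg unfolding hypergraph_def by blast
  then have "finite U" "finite X" using assms(2,3) finite_subset by blast+
  moreover have "0 < card U" using \<open>finite U\<close> assms(4) by (simp add: card_gt_0_iff)
  ultimately show "card X < card (U \<union> X)" using assms(3) by (subst card_Un_disjoint) auto
  obtain w where "w \<in> V - X - U" using assms(3,5) by blast
  then have "insert w X \<subseteq> V - U" "card (insert w X) = card X + 1"
    using assms(2,3) \<open>finite X\<close> by auto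
  then show "card X < card (V - U)" using card_mono[of "V - U" "insert w X"] finite_V by simp
  show "E = {e\<in>E. e \<subseteq> U \<union> X} \<union> {e\<in>E. e \<subseteq> V - U}" using split by blast
qed (use assms in auto)

lemma colorable_or_separating_pair:
  assumes hg: "hypergraph V E" and xy: "x \<in> V" "y \<in> V" "x \<noteq> y" "{x, y} \<notin> E"
    and z: "z \<in> V - {x, y}" and ab: "a < k" "b < k"
    and low: "\<forall>w\<in>V - {x, y}. degree E w \<le> k"
    and z_free: "\<And>g. g x = a \<Longrightarrow> g y = b \<Longrightarrow> card (blocked_colors E g {z}) < k"
  shows "colorable V E k \<or> separating_set V E {x, y}"
proof -
  let ?f0 = "\<lambda>v. if v = x then a else b"
  have X: "{x, y} \<subseteq> V" using xy by blast
  have "{e\<in>E. e \<subseteq> {x, y}} = {}" using xy(4) hypergraph_edge_not_subset_pair[OF hg] by blast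
  moreover have "?f0 ` {x, y} \<subseteq> {..<k}" using ab by auto
  ultimately have f0: "is_coloring {x, y} {e\<in>E. e \<subseteq> {x, y}} k ?f0"
    unfolding is_coloring_iff by (simp only: ball_empty simp_thms)
  have "card (blocked_colors E g {z}) < k" if "\<forall>v\<in>{x, y}. g v = ?f0 v" for g
    using that xy(3) by (intro z_free) auto
  from colorable_or_split[OF hg X z f0 low this] show ?thesis
  proof
    assume "colorable V E k"
    then show ?thesis ..
  next
    assume "\<exists>U. z \<in> U \<and> U \<subset> V - {x, y} \<and> (\<forall>e\<in>E. e \<subseteq> U \<union> {x, y} \<or> e \<subseteq> V - U)"
    then obtain U where "z \<in> U" "U \<subset> V - {x, y}" "\<forall>e\<in>E. e \<subseteq> U \<union> {x, y} \<or> e \<subseteq> V - U"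
      by blast
    then have "separating_set V E {x, y}" by (intro separating_set_of_split[OF hg X]) auto
    then show ?thesis ..
  qed
qed

subsection \<open>Recolouring across a separating pair\<close>

text \<open>Two transpositions of colours make the second colouring agree with the first on the pair.\<close>

lemma colorable_glue_pair:
  assumes f1: "is_coloring V1 E1 k f1" and f2: "is_coloring V2 E2 k f2" and S: "V1 \<inter> V2 = {x, y}"
    and "hypergraph V1 E1" "hypergraph V2 E2" "E \<subseteq> E1 \<union> E2"
    and same: "f1 x = f1 y \<longleftrightarrow> f2 x = f2 y"
  shows "colorable (V1 \<union> V2) E k"
proof -
  have "x \<in> V1" "y \<in> V1" "x \<in> V2" "y \<in> V2" using S by auto
  then have lt: "f1 x < k" "f1 y < k" "f2 x < k" using f1 f2 unfolding is_coloring_iff by auto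
  define g1 where "g1 = transpose (f2 x) (f1 x) \<circ> f2"
  define g2 where "g2 = transpose (g1 y) (f1 y) \<circ> g1"
  have g1: "is_coloring V2 E2 k g1" unfolding g1_def using is_coloring_transpose[OF f2] lt by blast
  then have "g1 y < k" using S unfolding is_coloring_iff by auto
  then have g2: "is_coloring V2 E2 k g2" unfolding g2_def using is_coloring_transpose[OF g1] lt by blast
  have "g1 x = f1 x" unfolding g1_def by simp
  moreover have "g1 x = g1 y \<longleftrightarrow> f2 x = f2 y" unfolding g1_def comp_def by (rule inj_eq[OF inj_transpose])
  ultimately have "g2 x = f1 x" "g2 y = f1 y" unfolding g2_def using same by (auto simp: transpose_def)
  then have "\<forall>v\<in>V1 \<inter> V2. f1 v = g2 v" using S by auto
  then have "is_coloring (V1 \<union> V2) E k (\<lambda>v. if v \<in> V1 then f1 v else g2 v)"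
    using is_coloring_glue[OF f1 g2] assms(4-6) by blast
  then show ?thesis by (rule colorableI)
qed

lemma recolor_apart:
  assumes hg: "hypergraph V E" and f: "is_coloring V E k f" and "x \<in> V" "x \<noteq> y"
    and free: "card (insert (f y) (blocked_colors E f {x})) < k"
  obtains g where "is_coloring V E k g" "g x \<noteq> g y"
proof -
  have "finite (insert (f y) (blocked_colors E f {x}))" using finite_blocked_colors_vertex[OF hg] by simp
  then obtain c where c: "c < k" "c \<notin> insert (f y) (blocked_colors E f {x})"
    using exists_color_not_in free by blast
  have "is_coloring (V - {x}) {e\<in>E. e \<inter> {x} = {}} k f" by (rule is_coloring_restrict[OF f]) auto
  then have "is_coloring V E k (\<lambda>v. if v \<in> {x} then c else f v)"
    using c hypergraph_no_edge_in_vertex[OF hg] by (intro is_coloring_extend) auto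
  moreover have "(if x \<in> {x} then c else f x) \<noteq> (if y \<in> {x} then c else f y)" using c assms(4) by auto
  ultimately show ?thesis by (rule that)
qed

lemma recolor_together:
  assumes hg: "hypergraph V E" and f: "is_coloring V E k f" and "x \<in> V" "y \<in> V" "{x, y} \<notin> E"
    and free: "card {e\<in>E. x \<in> e \<or> y \<in> e} < k"
  obtains g where "is_coloring V E k g" "g x = g y"
proof -
  have no_edge: "\<forall>e\<in>E. \<not> e \<subseteq> {x, y}" using assms(5) hypergraph_edge_not_subset_pair[OF hg] by blast
  have "{e\<in>E. e \<inter> {x, y} \<noteq> {}} = {e\<in>E. x \<in> e \<or> y \<in> e}" by auto
  then have "card (blocked_colors E f {x, y}) < k"
    using card_blocked_colors_le[OF hypergraph_finite_edges[OF hg] no_edge, of f] free by simp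
  then obtain c where c: "c < k" "c \<notin> blocked_colors E f {x, y}"
    using exists_color_not_in finite_blocked_colors[OF hypergraph_finite_edges[OF hg] no_edge] by blast
  have "is_coloring (V - {x, y}) {e\<in>E. e \<inter> {x, y} = {}} k f" by (rule is_coloring_restrict[OF f]) auto
  then have "is_coloring V E k (\<lambda>v. if v \<in> {x, y} then c else f v)"
    using c no_edge by (intro is_coloring_extend) auto
  then show ?thesis by (rule that) simp
qed

lemma card_insert_blocked_colors_le:
  assumes "hypergraph V E"
  shows "card (insert c (blocked_colors E f {x})) \<le> degree E x + 1"
proof -
  have "finite (blocked_colors E f {x})" by (rule finite_blocked_colors_vertex[OF assms])
  then have "card (insert c (blocked_colors E f {x})) \<le> card (blocked_colors E f {x}) + 1"
    by (simp add: card_insert_if)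
  then show ?thesis using card_blocked_colors_le_degree[OF assms, of f x] by linarith
qed

lemma unique_edge_at:
  assumes "degree E x = 1" "e \<in> E" "x \<in> e"
  shows "{e'\<in>E. x \<in> e'} = {e}"
proof -
  obtain a where a: "{e'\<in>E. x \<in> e'} = {a}" using assms(1) unfolding degree_def by (rule card_1_singletonE)
  then have "e = a" using assms(2,3) by blast
  then show ?thesis using a by simp
qed

lemma card_insert_blocked_colors_le_one:
  assumes "degree E x = 1" "e \<in> E" "x \<in> e" "y \<in> e" "y \<noteq> x"
  shows "card (insert (f y) (blocked_colors E f {x})) \<le> 1"
proof -
  have "blocked_colors E f {x} \<subseteq> {f y}"
  proof
    fix c assume "c \<in> blocked_colors E f {x}"
    then obtain e' where e': "e' \<in> E" "x \<in> e'" "\<forall>u\<in>e' - {x}. f u = c"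
      unfolding blocked_colors_def by blast
    then have "e' = e" using unique_edge_at[OF assms(1-3)] by blast
    then have "y \<in> e' - {x}" using assms(4,5) by simp
    then show "c \<in> {f y}" using e'(3) by simp
  qed
  then have "insert (f y) (blocked_colors E f {x}) = {f y}" by blast
  then show ?thesis by (simp only: card.insert card.empty) simp
qed

text \<open>The counting behind Dirac's argument: if side \<open>A\<close> cannot split the pair and side \<open>B\<close>
  cannot merge it, the blocked colours exceed the degree bounds unless \<open>k = 2\<close> and each of \<open>x, y\<close>
  has a single edge on each side; an edge containing both then frees a colour.\<close>

lemma compatible_colorings_across_pair:
  assumes hA: "hypergraph VA EA" and hB: "hypergraph VB EB"
    and xy: "x \<in> VA" "y \<in> VA" "x \<in> VB" "y \<in> VB" "x \<noteq> y" "{x, y} \<notin> EB"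
    and fA: "is_coloring VA EA k fA" "fA x = fA y"
    and fB: "is_coloring VB EB k fB" "fB x \<noteq> fB y"
    and dx: "degree EA x + degree EB x \<le> k" and dy: "degree EA y + degree EB y \<le> k"
    and big: "3 \<le> k \<or> (\<exists>e\<in>EA \<union> EB. x \<in> e \<and> y \<in> e)"
  shows "\<exists>gA gB. is_coloring VA EA k gA \<and> is_coloring VB EB k gB \<and> (gA x = gA y \<longleftrightarrow> gB x = gB y)"
proof (rule ccontr)
  assume incompatible: "\<not> ?thesis"
  have split_x: "k \<le> card (insert (fA y) (blocked_colors EA fA {x}))"
  proof (rule ccontr)
    assume "\<not> ?thesis"
    then have "card (insert (fA y) (blocked_colors EA fA {x})) < k" by simp
    then obtain g where "is_coloring VA EA k g" "g x \<noteq> g y"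
      by (rule recolor_apart[OF hA fA(1) xy(1,5)])
    then show False using incompatible fB by auto
  qed
  have split_y: "k \<le> card (insert (fA x) (blocked_colors EA fA {y}))"
  proof (rule ccontr)
    assume "\<not> ?thesis"
    then have "card (insert (fA x) (blocked_colors EA fA {y})) < k" by simp
    then obtain g where "is_coloring VA EA k g" "g y \<noteq> g x"
      by (rule recolor_apart[OF hA fA(1) xy(2) xy(5)[symmetric]])
    then show False using incompatible fB by auto
  qed
  have merge: "k \<le> card {e\<in>EB. x \<in> e \<or> y \<in> e}"
  proof (rule ccontr)
    assume "\<not> ?thesis"
    then have "card {e\<in>EB. x \<in> e \<or> y \<in> e} < k" by simp
    then obtain g where "is_coloring VB EB k g" "g x = g y"
      by (rule recolor_together[OF hB fB(1) xy(3,4,6)])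
    then show False using incompatible fA by auto
  qed
  have "{e\<in>EB. x \<in> e \<or> y \<in> e} = {e\<in>EB. x \<in> e} \<union> {e\<in>EB. y \<in> e}" by blast
  then have merge_le: "card {e\<in>EB. x \<in> e \<or> y \<in> e} \<le> degree EB x + degree EB y"
    unfolding degree_def by (simp add: card_Un_le)
  have ax: "k \<le> degree EA x + 1" and ay: "k \<le> degree EA y + 1"
    using split_x split_y card_insert_blocked_colors_le[OF hA] by (meson order_trans)+
  have "fB x < k" "fB y < k" using fB(1) xy(3,4) unfolding is_coloring_iff by auto
  then have "k = 2" and d1: "degree EA x = 1" "degree EB x = 1" "degree EB y = 1"
    using ax ay merge merge_le dx dy fB(2) by linarith+
  then obtain e where e: "e \<in> EA \<union> EB" "x \<in> e" "y \<in> e" using big by auto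
  show False
  proof (cases "e \<in> EA")
    case True
    then show False
      using card_insert_blocked_colors_le_one[OF d1(1) True e(2,3) xy(5)[symmetric], of fA]
        split_x \<open>k = 2\<close> by simp
  next
    case False
    then have "e \<in> EB" using e(1) by blast
    then have "{e'\<in>EB. x \<in> e' \<or> y \<in> e'} = {e}"
      using unique_edge_at[OF d1(2) _ e(2)] unique_edge_at[OF d1(3) _ e(3)] by blast
    then show False using merge \<open>k = 2\<close> by simp
  qed
qed

lemma degree_add_le:
  assumes "finite E" "E1 \<inter> E2 = {}" "E1 \<union> E2 \<subseteq> E"
  shows "degree E1 v + degree E2 v \<le> degree E v"
proof -
  have "degree E1 v + degree E2 v = card ({e\<in>E1. v \<in> e} \<union> {e\<in>E2. v \<in> e})"
    unfolding degree_def using assms by (subst card_Un_disjoint) (auto intro: finite_subset)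
  also have "\<dots> \<le> degree E v" unfolding degree_def using assms by (intro card_mono) auto
  finally show ?thesis .
qed

text \<open>Dirac's argument: colourings of the two sides either glue, or can be recoloured until they
  glue.\<close>

lemma colorable_of_separating_pair:
  assumes hg: "hypergraph V E" and sep: "separating_set V E {x, y}" and xy: "x \<noteq> y" "{x, y} \<notin> E"
    and sides: "\<And>W. W \<subset> V \<Longrightarrow> colorable W {e\<in>E. e \<subseteq> W} k"
    and low: "\<forall>v\<in>{x, y}. degree E v \<le> k"
    and big: "3 \<le> k \<or> (\<exists>e\<in>E. x \<in> e \<and> y \<in> e)"
  shows "colorable V E k"
proof (rule ccontr)
  assume not_colorable: "\<not> colorable V E k"
  obtain V1 V2 where V: "V1 \<subseteq> V" "V2 \<subseteq> V" "V1 \<union> V2 = V" "V1 \<inter> V2 = {x, y}"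
    and card: "card {x, y} < card V1" "card {x, y} < card V2"
    and split: "E = {e\<in>E. e \<subseteq> V1} \<union> {e\<in>E. e \<subseteq> V2}"
    using sep unfolding separating_set_def by (elim exE conjE) (rule that; assumption)
  define E1 where "E1 = {e\<in>E. e \<subseteq> V1}"
  define E2 where "E2 = {e\<in>E. e \<subseteq> V2}"
  have cover: "E \<subseteq> E1 \<union> E2" unfolding E1_def E2_def using split by (rule equalityD1)
  have hyp1: "hypergraph V1 E1" unfolding E1_def by (rule hypergraph_induced[OF hg V(1)])
  have hyp2: "hypergraph V2 E2" unfolding E2_def by (rule hypergraph_induced[OF hg V(2)])
  have outside: "\<exists>w\<in>W. w \<notin> {x, y}" if "card {x, y} < card W" for W
  proof (rule ccontr)
    assume "\<not> ?thesis"
    then have "card W \<le> card {x, y}" by (intro card_mono) auto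
    then show False using that by simp
  qed
  obtain w1 w2 where "w1 \<in> V1 - V2" "w2 \<in> V2 - V1" using outside[OF card(1)] outside[OF card(2)] V(4) by blast
  then have "V1 \<subset> V" "V2 \<subset> V" using V(1-3) by blast+
  obtain f1 where f1: "is_coloring V1 E1 k f1"
    using sides[OF \<open>V1 \<subset> V\<close>] unfolding E1_def colorable_def ..
  obtain f2 where f2: "is_coloring V2 E2 k f2"
    using sides[OF \<open>V2 \<subset> V\<close>] unfolding E2_def colorable_def ..
  have incompatible: False if "is_coloring V1 E1 k g1" "is_coloring V2 E2 k g2"
    "g1 x = g1 y \<longleftrightarrow> g2 x = g2 y" for g1 g2
    using colorable_glue_pair[OF that(1,2) V(4) hyp1 hyp2 cover that(3)] V(3) not_colorable by simp
  have disjoint: "E1 \<inter> E2 = {}"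
  proof (rule ccontr)
    assume "E1 \<inter> E2 \<noteq> {}"
    then obtain e where e: "e \<in> E" "e \<subseteq> V1 \<inter> V2" unfolding E1_def E2_def by blast
    then have "e = {x, y}" using V(4) by (intro hypergraph_edge_not_subset_pair[OF hg e(1)]) simp
    then show False using xy(2) e(1) by simp
  qed
  have degree_sum: "degree E1 v + degree E2 v \<le> k" "degree E2 v + degree E1 v \<le> k"
    if "v \<in> {x, y}" for v
  proof -
    have "degree E1 v + degree E2 v \<le> degree E v"
      using hypergraph_finite_edges[OF hg] disjoint by (rule degree_add_le) (auto simp: E1_def E2_def)
    moreover have "degree E v \<le> k" using low that by blast
    ultimately show "degree E1 v + degree E2 v \<le> k" "degree E2 v + degree E1 v \<le> k" by linarith+
  qed
  have xy_in: "x \<in> V1" "y \<in> V1" "x \<in> V2" "y \<in> V2" using V(4) by auto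
  have not_edge: "{x, y} \<notin> E1" "{x, y} \<notin> E2" using xy(2) unfolding E1_def E2_def by auto
  have big': "3 \<le> k \<or> (\<exists>e\<in>E1 \<union> E2. x \<in> e \<and> y \<in> e)" "3 \<le> k \<or> (\<exists>e\<in>E2 \<union> E1. x \<in> e \<and> y \<in> e)"
    using big cover by blast+
  consider "f1 x = f1 y \<longleftrightarrow> f2 x = f2 y" | "f1 x = f1 y" "f2 x \<noteq> f2 y" | "f1 x \<noteq> f1 y" "f2 x = f2 y"
    by blast
  then show False
  proof cases
    case 1
    then show False by (rule incompatible[OF f1 f2])
  next
    case 2
    then obtain g1 g2 where "is_coloring V1 E1 k g1" "is_coloring V2 E2 k g2" "g1 x = g1 y \<longleftrightarrow> g2 x = g2 y"
      using compatible_colorings_across_pair[OF hyp1 hyp2 xy_in xy(1) not_edge(2) f1 _ f2 _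
          degree_sum(1) degree_sum(1) big'(1)] by blast
    then show False by (rule incompatible)
  next
    case 3
    then obtain g1 g2 where "is_coloring V2 E2 k g2" "is_coloring V1 E1 k g1" "g2 x = g2 y \<longleftrightarrow> g1 x = g1 y"
      using compatible_colorings_across_pair[OF hyp2 hyp1 xy_in(3,4,1,2) xy(1) not_edge(1) f2 _ f1 _
          degree_sum(2) degree_sum(2) big'(2)] by blast
    then show False using incompatible[of g1 g2] by blast
  qed
qed

subsection \<open>Connected 2-regular graphs\<close>

definition neighbours :: "'a set set \<Rightarrow> 'a \<Rightarrow> 'a set" where
  "neighbours E v = {u. {v, u} \<in> E}"

definition is_path :: "'a set set \<Rightarrow> 'a list \<Rightarrow> bool" where
  "is_path E c \<longleftrightarrow> distinct c \<and> (\<forall>i. Suc i < length c \<longrightarrow> {c ! i, c ! Suc i} \<in> E)"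

definition cycle_edges :: "'a list \<Rightarrow> 'a set set" where
  "cycle_edges c = {{c ! i, c ! ((i + 1) mod length c)} | i. i < length c}"

lemma neighbours_sym: "u \<in> neighbours E v \<longleftrightarrow> v \<in> neighbours E u"
  unfolding neighbours_def by (simp add: insert_commute)

lemma is_path_snoc:
  assumes "is_path E c" "c \<noteq> []" "u \<notin> set c" "u \<in> neighbours E (last c)"
  shows "is_path E (c @ [u])"
  unfolding is_path_def
proof (intro conjI allI impI)
  show "distinct (c @ [u])" using assms(1,3) unfolding is_path_def by simp
  fix i assume i: "Suc i < length (c @ [u])"
  show "{(c @ [u]) ! i, (c @ [u]) ! Suc i} \<in> E"
  proof (cases "Suc i < length c")
    case True
    then show ?thesis using assms(1) unfolding is_path_def by (simp add: nth_append)
  next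
    case False
    then have "i = length c - 1" using i by simp
    then show ?thesis using assms(2,4) unfolding neighbours_def by (simp add: nth_append last_conv_nth)
  qed
qed

lemma exists_maximal_path:
  assumes "finite V" "z \<in> V" "\<forall>e\<in>E. e \<subseteq> V"
  obtains c where "c \<noteq> []" "is_path E c" "set c \<subseteq> V" "neighbours E (last c) \<subseteq> set c"
proof -
  define P where "P c \<longleftrightarrow> c \<noteq> [] \<and> is_path E c \<and> set c \<subseteq> V" for c
  have "P [z]" unfolding P_def is_path_def using assms(2) by simp
  moreover have "length c < Suc (card V)" if "P c" for c
  proof -
    have "length c = card (set c)" using that unfolding P_def is_path_def by (simp add: distinct_card)
    also have "\<dots> \<le> card V" using that assms(1) unfolding P_def by (simp add: card_mono)
    finally show ?thesis by simp
  qed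
  ultimately obtain c where c: "P c" and max: "\<forall>c'. P c' \<longrightarrow> length c' \<le> length c"
    using ex_has_greatest_nat[of P "[z]" length] by blast
  have "neighbours E (last c) \<subseteq> set c"
  proof
    fix u assume u: "u \<in> neighbours E (last c)"
    show "u \<in> set c"
    proof (rule ccontr)
      assume "u \<notin> set c"
      moreover have "u \<in> V" using u assms(3) unfolding neighbours_def by blast
      moreover have "is_path E (c @ [u])" using c u \<open>u \<notin> set c\<close> unfolding P_def by (intro is_path_snoc) auto
      ultimately have "P (c @ [u])" using c unfolding P_def by simp
      then have "length (c @ [u]) \<le> length c" using max by blast
      then show False by simp
    qed
  qed
  then show ?thesis using c that unfolding P_def by blast
qed

lemma closed_path_cycle_edge:
  assumes "is_path E c" "c \<noteq> []" "c ! 0 \<in> neighbours E (last c)" "i < length c"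
  shows "c ! ((i + 1) mod length c) \<in> neighbours E (c ! i)"
proof (cases "Suc i < length c")
  case True
  then show ?thesis using assms(1) unfolding is_path_def neighbours_def by simp
next
  case False
  then have "i = length c - 1" using assms(4) by simp
  then show ?thesis using assms(2,3) by (simp add: last_conv_nth)
qed

context
  fixes E :: "'a set set"
  assumes ordinary: "\<And>e. e \<in> E \<Longrightarrow> card e = 2"
begin

lemma edge_eq_pair:
  assumes "e \<in> E" "a \<in> e"
  obtains b where "b \<in> neighbours E a" "e = {a, b}"
proof -
  obtain x y where xy: "e = {x, y}" using ordinary[OF assms(1)] unfolding card_2_iff by blast
  show ?thesis
  proof (cases "a = x")
    case True
    then show ?thesis using that[of y] xy assms(1) unfolding neighbours_def by simp
  next
    case False
    then have "a = y" using xy assms(2) by blast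
    then show ?thesis using that[of x] xy assms(1) unfolding neighbours_def by (simp add: insert_commute)
  qed
qed

lemma neighbours_irrefl:
  assumes "u \<in> neighbours E v"
  shows "u \<noteq> v"
proof
  assume "u = v"
  then have "{v} \<in> E" using assms unfolding neighbours_def by simp
  then show False using ordinary by fastforce
qed

lemma degree_eq_card_neighbours: "degree E v = card (neighbours E v)"
proof -
  have "{e\<in>E. v \<in> e} = (\<lambda>u. {v, u}) ` neighbours E v"
  proof (intro equalityI subsetI)
    fix e assume "e \<in> {e\<in>E. v \<in> e}"
    then obtain u where "u \<in> neighbours E v" "e = {v, u}" using edge_eq_pair by blast
    then show "e \<in> (\<lambda>u. {v, u}) ` neighbours E v" by blast
  qed (auto simp: neighbours_def)
  moreover have "inj_on (\<lambda>u. {v, u}) (neighbours E v)"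
    by (rule inj_onI) (auto simp: doubleton_eq_iff)
  ultimately show ?thesis unfolding degree_def by (simp add: card_image)
qed

lemma clique_neighbourhood_closed:
  assumes "finite (neighbours E z)"
    and clique: "\<And>x y. x \<in> neighbours E z \<Longrightarrow> y \<in> neighbours E z \<Longrightarrow> x \<noteq> y \<Longrightarrow> y \<in> neighbours E x"
    and same_degree: "\<And>a. a \<in> neighbours E z \<Longrightarrow> degree E a = degree E z"
    and a: "a \<in> insert z (neighbours E z)"
  shows "neighbours E a \<subseteq> insert z (neighbours E z)"
proof (cases "a = z")
  case False
  then have a: "a \<in> neighbours E z" using a by blast
  have "z \<in> neighbours E a" using a by (rule iffD1[OF neighbours_sym])
  moreover have "neighbours E z - {a} \<subseteq> neighbours E a" using clique[OF a] by blast
  ultimately have sub: "insert z (neighbours E z - {a}) \<subseteq> neighbours E a" by blast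
  have pos: "0 < card (neighbours E z)" using assms(1) a by (auto simp: card_gt_0_iff)
  have "z \<notin> neighbours E z" using neighbours_irrefl by blast
  then have "card (insert z (neighbours E z - {a})) = card (neighbours E z)"
    using assms(1) a pos by simp
  also have card_eq: "\<dots> = card (neighbours E a)"
    using same_degree[OF a] by (simp add: degree_eq_card_neighbours)
  finally have card_same: "card (insert z (neighbours E z - {a})) = card (neighbours E a)" .
  have "finite (neighbours E a)" using card_eq pos by (intro card_ge_0_finite) simp
  then have "insert z (neighbours E z - {a}) = neighbours E a" using card_subset_eq sub card_same by blast
  then show ?thesis by blast
qed blast

lemma neighbour_closed_split:
  assumes edges: "\<forall>e\<in>E. e \<subseteq> V" and closed: "\<And>a. a \<in> A \<Longrightarrow> neighbours E a \<subseteq> A"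
  shows "\<forall>e\<in>E. e \<subseteq> A \<or> e \<subseteq> V - A"
proof
  fix e assume e: "e \<in> E"
  show "e \<subseteq> A \<or> e \<subseteq> V - A"
  proof (cases "e \<inter> A = {}")
    case False
    then obtain a where a: "a \<in> e" "a \<in> A" by blast
    obtain b where "b \<in> neighbours E a" "e = {a, b}" using edge_eq_pair[OF e a(1)] .
    then show ?thesis using closed[OF a(2)] a(2) by blast
  qed (use e edges in blast)
qed

context
  fixes V :: "'a set"
  assumes regular: "\<And>v. v \<in> V \<Longrightarrow> card (neighbours E v) = 2"
begin

lemma neighbours_eq_pair:
  assumes "v \<in> V" "a \<in> neighbours E v" "b \<in> neighbours E v" "a \<noteq> b"
  shows "neighbours E v = {a, b}"
proof -
  have "finite (neighbours E v)" using regular[OF assms(1)] by (intro card_ge_0_finite) simp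
  moreover have "{a, b} \<subseteq> neighbours E v" "card {a, b} = card (neighbours E v)"
    using assms regular[OF assms(1)] by auto
  ultimately have "{a, b} = neighbours E v" by (rule card_subset_eq)
  then show ?thesis by simp
qed

text \<open>In a 2-regular graph the last vertex of a maximal path has both neighbours on the path; the
  second one can only be the first vertex, since an inner vertex already has two path neighbours.\<close>

lemma maximal_path_closes:
  assumes c: "c \<noteq> []" "is_path E c" "set c \<subseteq> V" and max: "neighbours E (last c) \<subseteq> set c"
  shows "3 \<le> length c \<and> c ! 0 \<in> neighbours E (last c)"
proof -
  define n where "n = length c"
  define t where "t = last c"
  have t: "t = c ! (n - 1)" "t \<in> V" using c unfolding t_def n_def by (auto simp: last_conv_nth)
  have edge: "c ! Suc i \<in> neighbours E (c ! i)" if "Suc i < n" for i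
    using c(2) that unfolding is_path_def n_def neighbours_def by blast
  have index_eq: "c ! i = c ! j \<longleftrightarrow> i = j" if "i < n" "j < n" for i j
    using c(2) that unfolding is_path_def n_def by (simp add: nth_eq_iff_index_eq)
  have "\<not> neighbours E t \<subseteq> {c ! (n - 2)}"
  proof
    assume "neighbours E t \<subseteq> {c ! (n - 2)}"
    then have "card (neighbours E t) \<le> 1" using card_mono[of "{c ! (n - 2)}"] by fastforce
    then show False using regular[OF t(2)] by simp
  qed
  then obtain u where u: "u \<in> neighbours E t" "u \<noteq> c ! (n - 2)" by blast
  then have "u \<in> set c" using max unfolding t_def by blast
  then obtain j where "j < n" "u = c ! j" unfolding n_def by (auto simp: in_set_conv_nth)
  then have j: "j < n" "c ! j \<in> neighbours E t" "j \<noteq> n - 2" using u by auto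
  have "j \<noteq> n - 1" using neighbours_irrefl[OF j(2)] t(1) by blast
  then have "j + 2 < n" using j(1,3) by linarith
  have "j = 0"
  proof (rule ccontr)
    assume "j \<noteq> 0"
    have cjV: "c ! j \<in> V" using c(3) j(1) unfolding n_def by auto
    have "c ! j \<in> neighbours E (c ! (j - 1))" using edge[of "j - 1"] \<open>j \<noteq> 0\<close> j(1) by simp
    then have "c ! (j - 1) \<in> neighbours E (c ! j)" by (rule iffD1[OF neighbours_sym])
    moreover have "c ! (j + 1) \<in> neighbours E (c ! j)" using edge[of j] \<open>j + 2 < n\<close> by simp
    moreover have "c ! (j - 1) \<noteq> c ! (j + 1)" using index_eq[of "j - 1" "j + 1"] \<open>j + 2 < n\<close> by simp
    ultimately have "neighbours E (c ! j) = {c ! (j - 1), c ! (j + 1)}"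
      by (rule neighbours_eq_pair[OF cjV])
    moreover have "t \<in> neighbours E (c ! j)" using j(2) by (rule iffD1[OF neighbours_sym])
    ultimately have "c ! (n - 1) = c ! (j - 1) \<or> c ! (n - 1) = c ! (j + 1)" using t(1) by simp
    moreover have lt: "n - 1 < n" "j - 1 < n" "j + 1 < n" using \<open>j + 2 < n\<close> by linarith+
    ultimately have "n - 1 = j - 1 \<or> n - 1 = j + 1" using index_eq[OF lt(1,2)] index_eq[OF lt(1,3)] by blast
    then show False using \<open>j + 2 < n\<close> \<open>j \<noteq> 0\<close> by linarith
  qed
  then show ?thesis using j(2) \<open>j + 2 < n\<close> unfolding t_def n_def by simp
qed

lemma closed_path_neighbours:
  assumes c: "is_path E c" "set c \<subseteq> V" "3 \<le> length c" "c ! 0 \<in> neighbours E (last c)"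
    and i: "i < length c"
  shows "neighbours E (c ! i) \<subseteq> {c ! j | j. j < length c \<and> (j = (i + 1) mod length c \<or> i = (j + 1) mod length c)}"
    (is "_ \<subseteq> ?S")
proof -
  define n where "n = length c"
  define s where "s = (i + 1) mod n"
  define p where "p = (if i = 0 then n - 1 else i - 1)"
  have "c \<noteq> []" using c(3) by auto
  then have s: "s < n" unfolding s_def n_def by simp
  have p: "p < n" "(p + 1) mod n = i" "p \<noteq> s"
    using i c(3) unfolding p_def s_def n_def by (auto simp: mod_Suc)
  have s_nb: "c ! s \<in> neighbours E (c ! i)"
    using closed_path_cycle_edge[OF c(1) \<open>c \<noteq> []\<close> c(4) i] unfolding s_def n_def .
  have "c ! i \<in> neighbours E (c ! p)"
    using closed_path_cycle_edge[OF c(1) \<open>c \<noteq> []\<close> c(4), of p] p unfolding n_def by simp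
  then have p_nb: "c ! p \<in> neighbours E (c ! i)" by (rule iffD1[OF neighbours_sym])
  have "distinct c" using c(1) unfolding is_path_def by blast
  then have "c ! s \<noteq> c ! p" using s p unfolding n_def by (simp add: nth_eq_iff_index_eq)
  then have "neighbours E (c ! i) = {c ! s, c ! p}"
    using c(2) i by (intro neighbours_eq_pair[OF _ s_nb p_nb]) auto
  moreover have "c ! s \<in> ?S" by (intro CollectI exI[of _ s] conjI) (use s in \<open>simp_all add: s_def n_def\<close>)
  moreover have "c ! p \<in> ?S" by (intro CollectI exI[of _ p] conjI) (use p in \<open>simp_all add: n_def\<close>)
  ultimately show ?thesis by simp
qed

lemma connected_two_regular_is_cycle:
  assumes "finite V" "V \<noteq> {}" and edges: "\<forall>e\<in>E. e \<subseteq> V"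
    and connected: "\<And>A. A \<subseteq> V \<Longrightarrow> \<forall>e\<in>E. e \<subseteq> A \<or> e \<subseteq> V - A \<Longrightarrow> A = {} \<or> A = V"
  obtains c where "distinct c" "3 \<le> length c" "set c = V" "E = cycle_edges c"
proof -
  obtain z where "z \<in> V" using assms(2) by blast
  then obtain c where c: "c \<noteq> []" "is_path E c" "set c \<subseteq> V" "neighbours E (last c) \<subseteq> set c"
    using exists_maximal_path assms(1) edges by metis
  have closed: "3 \<le> length c" "c ! 0 \<in> neighbours E (last c)" using maximal_path_closes[OF c] by auto
  have edge_at_cycle: "{a, b} \<in> cycle_edges c" if a: "a \<in> set c" and "b \<in> neighbours E a" for a b
  proof -
    obtain i where i: "i < length c" "a = c ! i" using a by (auto simp: in_set_conv_nth)
    then obtain j where "j < length c" "b = c ! j"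
      "j = (i + 1) mod length c \<or> i = (j + 1) mod length c"
      using closed_path_neighbours[OF c(2,3) closed i(1)] \<open>b \<in> neighbours E a\<close> by blast
    then show ?thesis using i unfolding cycle_edges_def by (auto simp: insert_commute)
  qed
  have "neighbours E a \<subseteq> set c" if a: "a \<in> set c" for a
  proof -
    obtain i where i: "i < length c" "a = c ! i" using a by (auto simp: in_set_conv_nth)
    have "{c ! j | j. j < length c \<and> (j = (i + 1) mod length c \<or> i = (j + 1) mod length c)} \<subseteq> set c"
      by auto
    then show ?thesis using closed_path_neighbours[OF c(2,3) closed i(1)] i(2) by blast
  qed
  then have "set c = V" using connected[OF c(3) neighbour_closed_split[OF edges]] c(1) by blast
  moreover have "E = cycle_edges c"
  proof
    show "cycle_edges c \<subseteq> E"
      using closed_path_cycle_edge[OF c(2,1) closed(2)] unfolding cycle_edges_def neighbours_def by auto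
    show "E \<subseteq> cycle_edges c"
    proof
      fix e assume e: "e \<in> E"
      obtain a where "a \<in> e" using ordinary[OF e] by fastforce
      then obtain b where "b \<in> neighbours E a" "e = {a, b}" using edge_eq_pair[OF e] by blast
      moreover have "a \<in> set c" using \<open>a \<in> e\<close> e edges \<open>set c = V\<close> by blast
      ultimately show "e \<in> cycle_edges c" using edge_at_cycle by blast
    qed
  qed
  moreover have "distinct c" using c(2) unfolding is_path_def by blast
  ultimately show ?thesis using that closed(1) by blast
qed

end

end

lemma even_cycle_colorable:
  assumes "distinct c" "even (length c)"
  shows "colorable (set c) (cycle_edges c) 2"
proof -
  define n where "n = length c"
  define col where "col v = the_inv_into {..<n} (nth c) v mod 2" for v
  have inj: "inj_on (nth c) {..<n}" using assms(1) unfolding n_def by (simp add: inj_on_nth)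
  have col: "col (c ! i) = i mod 2" if "i < n" for i
    unfolding col_def using the_inv_into_f_f[OF inj] that by simp
  have "nonmonochromatic col e" if e: "e \<in> cycle_edges c" for e
  proof -
    obtain i where i: "i < n" "e = {c ! i, c ! ((i + 1) mod n)}"
      using e unfolding cycle_edges_def n_def by blast
    have "i mod 2 \<noteq> ((i + 1) mod n) mod 2"
    proof (cases "Suc i < n")
      case True
      then show ?thesis by simp presburger
    next
      case False
      then have "Suc i = n" using i(1) by simp
      then show ?thesis using assms(2) unfolding n_def by simp presburger
    qed
    then show ?thesis using col i by (intro nonmonochromatic_intro[of "c ! i" e "c ! ((i + 1) mod n)"]) auto
  qed
  moreover have "col ` set c \<subseteq> {..<2}" unfolding col_def by auto
  ultimately have "is_coloring (set c) (cycle_edges c) 2 col" unfolding is_coloring_iff by blast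
  then show ?thesis by (rule colorableI)
qed

subsection \<open>A critical hypergraph with a single high vertex\<close>

lemma single_high_vertex_degrees:
  assumes "critical (k + 1) V E" "high_vertices k V E = {h}"
  shows "h \<in> V" "k + 1 \<le> degree E h" "\<And>v. v \<in> V \<Longrightarrow> v \<noteq> h \<Longrightarrow> degree E v = k"
proof -
  have "h \<in> high_vertices k V E" using assms(2) by simp
  then show "h \<in> V" "k + 1 \<le> degree E h" unfolding high_vertices_def by auto
  fix v assume v: "v \<in> V" "v \<noteq> h"
  then have "v \<notin> high_vertices k V E" using assms(2) by simp
  then have "degree E v < k + 1" using v(1) unfolding high_vertices_def by simp
  then show "degree E v = k" using critical_min_degree[OF assms(1) v(1)] by linarith
qed

locale one_high_vertex =
  fixes V :: "'a set" and E :: "'a set set" and k :: nat and h :: 'a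
  assumes critical: "critical (k + 1) V E" and two_le_k: "2 \<le> k" and h_in_V: "h \<in> V"
    and low: "\<And>v. v \<in> V \<Longrightarrow> v \<noteq> h \<Longrightarrow> degree E v = k"
    and high: "k + 1 \<le> degree E h"
    and no_separating_pair: "\<And>S. card S = 2 \<Longrightarrow> \<not> separating_set V E S"
begin

lemma hypergraph: "hypergraph V E"
  by (rule critical_hypergraph[OF critical])

text \<open>Otherwise colour \<open>h\<close> and \<open>y\<close> alike and the rest greedily towards \<open>z\<close>, which sees the
  repeated colour on two of its edges: either \<open>G\<close> is \<open>k\<close>-colourable or \<open>{h, y}\<close> separates.\<close>

lemma hub_pair_edge_if_common_edge:
  assumes eh: "eh \<in> E" "h \<in> eh" "z \<in> eh" "z \<noteq> h"
    and e: "e \<in> E" "z \<in> e" "h \<notin> e" "y \<in> e" "y \<noteq> z"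
  shows "{h, y} \<in> E"
proof (rule ccontr)
  assume not_edge: "{h, y} \<notin> E"
  have "y \<noteq> h" "y \<in> V" "z \<in> V" using e hypergraph_edge_subset[OF hypergraph] by auto
  have "eh \<noteq> e" using eh(2) e(3) by blast
  have z_free: "card (blocked_colors E g {z}) < k" if "g h = 0" "g y = 0" for g
  proof -
    have "card (blocked_colors E g {z}) < degree E z"
      using eh e \<open>eh \<noteq> e\<close> that
      by (intro card_blocked_colors_less_degree_if_repeated[OF hypergraph, of eh e z h y]) auto
    then show ?thesis using low \<open>z \<in> V\<close> eh(4) by simp
  qed
  have "z \<in> V - {h, y}" using \<open>z \<in> V\<close> eh(4) e(5) by blast
  then have "colorable V E k \<or> separating_set V E {h, y}"
    using colorable_or_separating_pair[OF hypergraph h_in_V \<open>y \<in> V\<close> \<open>y \<noteq> h\<close>[symmetric] not_edge,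
        of z 0 k 0] two_le_k low z_free by auto
  then show False
    using critical_not_colorable[OF critical] no_separating_pair[of "{h, y}"] \<open>y \<noteq> h\<close> by auto
qed

text \<open>The vertices sharing no edge with \<open>h\<close> would form a union of components.\<close>

lemma shares_edge_with_hub:
  assumes "v \<in> V" "v \<noteq> h"
  shows "\<exists>e\<in>E. h \<in> e \<and> v \<in> e"
proof -
  define A where "A = {v\<in>V. v \<noteq> h \<and> \<not> (\<exists>e\<in>E. h \<in> e \<and> v \<in> e)}"
  have "e \<subseteq> A \<or> e \<subseteq> V - A" if e: "e \<in> E" for e
  proof (rule ccontr)
    assume "\<not> ?thesis"
    then obtain w u where wu: "w \<in> e" "w \<in> A" "u \<in> e" "u \<notin> A"
      using hypergraph_edge_subset[OF hypergraph e] by blast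
    have "h \<notin> e" using wu(1,2) e unfolding A_def by blast
    moreover have "u \<in> V" using hypergraph_edge_subset[OF hypergraph e] wu(3) by blast
    ultimately obtain eh where eh: "eh \<in> E" "h \<in> eh" "u \<in> eh" "u \<noteq> h"
      using wu(3,4) unfolding A_def by blast
    have "w \<noteq> u" using wu(2,4) by blast
    have "{h, w} \<in> E" by (rule hub_pair_edge_if_common_edge[OF eh e wu(3) \<open>h \<notin> e\<close> wu(1) \<open>w \<noteq> u\<close>])
    then show False using wu(2) unfolding A_def by blast
  qed
  moreover have "A \<subseteq> V" unfolding A_def by blast
  ultimately have "A = {} \<or> A = V" using critical_connected[OF critical] by blast
  moreover have "h \<notin> A" unfolding A_def by blast
  ultimately have "A = {}" using h_in_V by blast
  then show ?thesis using assms unfolding A_def by blast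
qed

lemma hub_pair_edge:
  assumes v: "v \<in> V" "v \<noteq> h"
  shows "{h, v} \<in> E"
proof -
  obtain eh where eh: "eh \<in> E" "h \<in> eh" "v \<in> eh" using shares_edge_with_hub[OF v] by blast
  have "{e\<in>E. v \<in> e} \<noteq> {eh}"
  proof
    assume "{e\<in>E. v \<in> e} = {eh}"
    then have "degree E v = 1" unfolding degree_def by simp
    then show False using low[OF v] two_le_k by simp
  qed
  then obtain e where e: "e \<in> E" "v \<in> e" "e \<noteq> eh" using eh by blast
  show ?thesis
  proof (cases "h \<in> e")
    case True
    then have "h \<in> e \<inter> eh" using eh(2) by blast
    moreover have "e \<inter> eh = {v}"
      using critical_low_vertex_edges_meet[OF critical v(1) _ e(1) eh(1) e(3) e(2) eh(3)] low[OF v] by simp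
    ultimately show ?thesis using v(2) by auto
  next
    case False
    obtain u where u: "u \<in> e" "u \<noteq> v" using hypergraph_edge_other[OF hypergraph e(1)] by blast
    have "u \<in> V" "u \<noteq> h" using u(1) False hypergraph_edge_subset[OF hypergraph e(1)] by auto
    then obtain eu where "eu \<in> E" "h \<in> eu" "u \<in> eu" using shares_edge_with_hub by blast
    then show ?thesis
      by (rule hub_pair_edge_if_common_edge[OF _ _ _ \<open>u \<noteq> h\<close> e(1) u(1) False e(2) u(2)[symmetric]])
  qed
qed

lemma hub_edge_eq_pair:
  assumes "e \<in> E" "h \<in> e"
  obtains v where "v \<in> V" "v \<noteq> h" "e = {h, v}"
proof -
  obtain v where v: "v \<in> e" "v \<noteq> h" using hypergraph_edge_other[OF hypergraph assms(1)] by blast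
  then have "v \<in> V" using hypergraph_edge_subset[OF hypergraph assms(1)] by blast
  have "e = {h, v}"
  proof (rule ccontr)
    assume "e \<noteq> {h, v}"
    moreover have "degree E v \<le> k" using low[OF \<open>v \<in> V\<close> v(2)] by simp
    ultimately have "e \<inter> {h, v} = {v}"
      by (intro critical_low_vertex_edges_meet[OF critical \<open>v \<in> V\<close> _ assms(1)
            hub_pair_edge[OF \<open>v \<in> V\<close> v(2)] _ v(1)]) simp_all
    then show False using assms(2) v(2) by auto
  qed
  then show ?thesis by (rule that[OF \<open>v \<in> V\<close> v(2)])
qed

abbreviation VH :: "'a set" where "VH \<equiv> V - {h}"

abbreviation EH :: "'a set set" where "EH \<equiv> {e\<in>E. h \<notin> e}"

lemma edges_decomposition: "E = EH \<union> (\<lambda>v. {h, v}) ` VH"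
proof (intro equalityI subsetI)
  fix e assume "e \<in> E"
  then show "e \<in> EH \<union> (\<lambda>v. {h, v}) ` VH"
    by (cases "h \<in> e") (auto elim: hub_edge_eq_pair)
qed (auto intro: hub_pair_edge)

lemma card_VH: "k + 1 \<le> card VH"
proof -
  have "{e\<in>E. h \<in> e} \<subseteq> (\<lambda>v. {h, v}) ` VH" by (auto elim: hub_edge_eq_pair)
  moreover have "finite VH" using hypergraph unfolding hypergraph_def by blast
  ultimately have "degree E h \<le> card VH"
    unfolding degree_def by (meson card_image_le card_mono finite_imageI order_trans)
  then show ?thesis using high by linarith
qed

lemma VH_nonempty: "VH \<noteq> {}"
proof
  assume "VH = {}"
  then have "card VH = 0" by (simp only: card.empty)
  then show False using card_VH by simp
qed

lemma hypergraph_H: "hypergraph VH EH"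
  using hypergraph unfolding hypergraph_def by auto

lemma degree_H:
  assumes "v \<in> VH"
  shows "degree EH v = k - 1"
proof -
  have v: "v \<in> V" "v \<noteq> h" using assms by auto
  have "{e\<in>EH. v \<in> e} = {e\<in>E. v \<in> e} - {{h, v}}"
  proof (intro equalityI subsetI)
    fix e assume e: "e \<in> {e\<in>E. v \<in> e} - {{h, v}}"
    show "e \<in> {e\<in>EH. v \<in> e}"
    proof (cases "h \<in> e")
      case True
      then obtain u where "e = {h, u}" "u \<noteq> h" using e by (auto elim: hub_edge_eq_pair)
      then show ?thesis using e v by (auto simp: doubleton_eq_iff)
    qed (use e in blast)
  qed auto
  moreover have "{h, v} \<in> {e\<in>E. v \<in> e}" using hub_pair_edge[OF v] by simp
  ultimately have "degree EH v = degree E v - 1"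
    unfolding degree_def using finite_edges_at[OF hypergraph] by (simp add: card_Diff_singleton)
  then show ?thesis using low[OF v] by simp
qed

lemma H_edges_meet:
  assumes "e1 \<in> EH" "e2 \<in> EH" "e1 \<noteq> e2" "v \<in> e1" "v \<in> e2"
  shows "e1 \<inter> e2 = {v}"
proof -
  have "v \<in> V" "v \<noteq> h" using assms(1,4) hypergraph_edge_subset[OF hypergraph] by auto
  then have "degree E v \<le> k" using low by simp
  with \<open>v \<in> V\<close> show ?thesis using assms
    by (intro critical_low_vertex_edges_meet[OF critical]) auto
qed

lemma H_not_colorable: "\<not> colorable VH EH (k - 1)"
proof
  assume "colorable VH EH (k - 1)"
  then obtain f where f: "is_coloring VH EH (k - 1) f" unfolding colorable_def ..
  define g where "g v = (if v = h then k - 1 else f v)" for v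
  have "is_coloring V E k g" unfolding is_coloring_iff
  proof (intro conjI ballI)
    show "g ` V \<subseteq> {..<k}" using f two_le_k unfolding g_def is_coloring_iff by auto
    fix e assume e: "e \<in> E"
    show "nonmonochromatic g e"
    proof (cases "h \<in> e")
      case True
      then obtain v where v: "v \<in> V" "v \<noteq> h" "e = {h, v}" using e by (auto elim: hub_edge_eq_pair)
      then have "f v < k - 1" using f unfolding is_coloring_iff by auto
      then show ?thesis using v unfolding g_def by (intro nonmonochromatic_intro[of h e v]) auto
    next
      case False
      then have "nonmonochromatic f e" using f e unfolding is_coloring_iff by blast
      then show ?thesis using False unfolding g_def by (subst nonmonochromatic_cong[of e _ f]) auto
    qed
  qed
  then show False using critical_not_colorable[OF critical] colorableI by blast
qed

lemma H_delete_edge_colorable: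
  assumes "e \<in> EH"
  shows "colorable VH (EH - {e}) (k - 1)"
proof -
  obtain g where g: "is_coloring V (E - {e}) k g"
    using critical_delete_edge_colorable[OF critical] assms unfolding colorable_def by blast
  have "g v \<noteq> g h" if "v \<in> VH" for v
  proof -
    have "{h, v} \<in> E - {e}" using hub_pair_edge that assms by auto
    then have "nonmonochromatic g {h, v}" using g unfolding is_coloring_iff by blast
    then show ?thesis unfolding nonmonochromatic_def by auto
  qed
  moreover have "g h < k" using g h_in_V unfolding is_coloring_iff by blast
  moreover have "is_coloring VH (EH - {e}) k g" using g by (rule is_coloring_restrict) auto
  ultimately have "is_coloring VH (EH - {e}) (k - 1) (transpose (k - 1) (g h) \<circ> g)"
    by (intro is_coloring_drop_color) auto
  then show ?thesis by (rule colorableI)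
qed

lemma H_vertex_in_edge:
  assumes "v \<in> VH"
  obtains e where "e \<in> EH" "v \<in> e"
proof -
  have "{e\<in>EH. v \<in> e} \<noteq> {}"
  proof
    assume "{e\<in>EH. v \<in> e} = {}"
    then have "degree EH v = 0" unfolding degree_def by (simp only: card.empty)
    then show False using degree_H[OF assms] two_le_k by simp
  qed
  then show ?thesis using that by blast
qed

lemma H_proper_induced_colorable:
  assumes "W \<subset> VH"
  shows "colorable W {e\<in>EH. e \<subseteq> W} (k - 1)"
proof -
  obtain w where "w \<in> VH - W" using assms by blast
  then obtain e where e: "e \<in> EH" "w \<in> e" using H_vertex_in_edge by blast
  obtain f where "is_coloring VH (EH - {e}) (k - 1) f"
    using H_delete_edge_colorable[OF e(1)] unfolding colorable_def ..
  then have "is_coloring W {e\<in>EH. e \<subseteq> W} (k - 1) f"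
    using assms e \<open>w \<in> VH - W\<close> by (elim is_coloring_restrict) auto
  then show ?thesis by (rule colorableI)
qed

lemma H_no_separating_pair:
  assumes xy: "x \<in> VH" "y \<in> VH" "x \<noteq> y" "{x, y} \<notin> EH"
    and big: "3 \<le> k - 1 \<or> (\<exists>e\<in>EH. x \<in> e \<and> y \<in> e)"
  shows "\<not> separating_set VH EH {x, y}"
proof
  assume "separating_set VH EH {x, y}"
  moreover note H_proper_induced_colorable
  moreover have "\<forall>v\<in>{x, y}. degree EH v \<le> k - 1" using degree_H xy by simp
  ultimately have "colorable VH EH (k - 1)"
    using colorable_of_separating_pair[OF hypergraph_H _ xy(3,4) _ _ big] by blast
  then show False using H_not_colorable by blast
qed

lemma H_connected:
  assumes A: "A \<subseteq> VH" and split: "\<forall>e\<in>EH. e \<subseteq> A \<or> e \<subseteq> VH - A"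
  shows "A = {} \<or> A = VH"
proof (rule ccontr)
  assume "\<not> ?thesis"
  then obtain a b where a: "a \<in> A" and b: "b \<in> VH - A" using A by blast
  obtain e where e: "e \<in> EH" "a \<in> e" using H_vertex_in_edge A a by blast
  have "e \<subseteq> A" using split e a by blast
  moreover obtain a' where "a' \<in> e" "a' \<noteq> a" using hypergraph_edge_other[OF hypergraph_H e(1)] by blast
  ultimately have a': "a' \<in> A - {a}" by blast
  have aV: "a \<in> V" "a \<noteq> h" using a A by auto
  have "separating_set V E {h, a}"
  proof (rule separating_set_of_split[OF hypergraph])
    show "{h, a} \<subseteq> V" using aV h_in_V by blast
    show "A - {a} \<subseteq> V - {h, a}" using A by blast
    show "A - {a} \<noteq> {}" using a' by blast
    have "b \<in> V - {h, a}" "b \<notin> A - {a}" using a b by auto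
    then show "A - {a} \<noteq> V - {h, a}" by blast
    show "\<forall>e\<in>E. e \<subseteq> A - {a} \<union> {h, a} \<or> e \<subseteq> V - (A - {a})"
    proof
      fix e assume e: "e \<in> E"
      show "e \<subseteq> A - {a} \<union> {h, a} \<or> e \<subseteq> V - (A - {a})"
      proof (cases "h \<in> e")
        case True
        then obtain v where "v \<in> V" "e = {h, v}" using e by (auto elim: hub_edge_eq_pair)
        moreover have "h \<notin> A" using A by blast
        ultimately show ?thesis using h_in_V by auto
      next
        case False
        then have "e \<subseteq> A \<or> e \<subseteq> VH - A" using split e by blast
        then show ?thesis by blast
      qed
    qed
  qed
  then show False using no_separating_pair[of "{h, a}"] aV(2) by simp
qed

lemma H_edges_ordinary:
  assumes "3 \<le> k" "e \<in> EH"
  shows "card e = 2"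
proof (rule ccontr)
  assume "card e \<noteq> 2"
  moreover have "2 \<le> card e" using hypergraph_H assms(2) unfolding hypergraph_def by blast
  ultimately have three: "3 \<le> card e" by linarith
  obtain z x where zx: "z \<in> e" "x \<in> e" "x \<noteq> z"
    using hypergraph_edge_other[OF hypergraph_H assms(2)] by blast
  have "\<not> e \<subseteq> {z, x}"
  proof
    assume "e \<subseteq> {z, x}"
    then have "card e \<le> card {z, x}" by (intro card_mono) auto
    then show False using three card_pair_le[of z x] by linarith
  qed
  then obtain y where y: "y \<in> e" "y \<noteq> z" "y \<noteq> x" by blast
  have in_VH: "z \<in> VH" "x \<in> VH" "y \<in> VH" using hypergraph_edge_subset[OF hypergraph_H assms(2)] zx y by auto
  have not_edge: "{x, y} \<notin> EH"
  proof
    assume xy: "{x, y} \<in> EH"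
    have "e \<noteq> {x, y}" using three card_pair_le[of x y] by auto
    then have "e \<inter> {x, y} = {x}" by (rule H_edges_meet[OF assms(2) xy]) (use zx in simp_all)
    then show False using y(1,3) by auto
  qed
  have z_free: "card (blocked_colors EH g {z}) < k - 1" if "g x = 0" "g y = 1" for g
  proof -
    have "nonmonochromatic g (e - {z})"
      using that zx y by (intro nonmonochromatic_intro[of x "e - {z}" y]) auto
    then have "card (blocked_colors EH g {z}) < degree EH z"
      by (rule card_blocked_colors_less_degree_if_nonmonochromatic[OF hypergraph_H assms(2) zx(1)])
    then show ?thesis using degree_H[OF in_VH(1)] by simp
  qed
  have "colorable VH EH (k - 1) \<or> separating_set VH EH {x, y}"
    by (rule colorable_or_separating_pair[OF hypergraph_H in_VH(2,3) y(3)[symmetric] not_edge _ _ _ _ z_free])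
      (use in_VH zx y assms(1) degree_H in auto)
  moreover have "\<not> separating_set VH EH {x, y}"
    using H_no_separating_pair[OF in_VH(2,3) y(3)[symmetric] not_edge] assms(2) zx(2) y(1) by blast
  ultimately show False using H_not_colorable by blast
qed

lemma H_neighbours_adjacent:
  assumes k4: "4 \<le> k" and z: "z \<in> VH" and xy: "x \<in> neighbours EH z" "y \<in> neighbours EH z" "x \<noteq> y"
  shows "y \<in> neighbours EH x"
proof (rule ccontr)
  have ordinary: "\<And>e. e \<in> EH \<Longrightarrow> card e = 2" using H_edges_ordinary k4 by simp
  assume "y \<notin> neighbours EH x"
  then have not_edge: "{x, y} \<notin> EH" unfolding neighbours_def by blast
  have edges: "{z, x} \<in> EH" "{z, y} \<in> EH" using xy unfolding neighbours_def by auto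
  have "z \<noteq> x" "z \<noteq> y" using xy neighbours_irrefl[OF ordinary] by blast+
  have z_free: "card (blocked_colors EH g {z}) < k - 1" if "g x = 0" "g y = 0" for g
  proof -
    have "{z, x} \<noteq> {z, y}" using xy(3) \<open>z \<noteq> x\<close> by (auto simp: doubleton_eq_iff)
    then have "card (blocked_colors EH g {z}) < degree EH z"
      using \<open>z \<noteq> x\<close> \<open>z \<noteq> y\<close> that
      by (intro card_blocked_colors_less_degree_if_repeated[OF hypergraph_H edges, of z x y]) auto
    then show ?thesis using degree_H[OF z] by simp
  qed
  have "x \<in> VH" "y \<in> VH" using xy edges hypergraph_edge_subset[OF hypergraph_H] by auto
  moreover have "3 \<le> k - 1" using k4 by linarith
  ultimately have "\<not> separating_set VH EH {x, y}"
    using H_no_separating_pair[OF _ _ xy(3) not_edge disjI1] by blast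
  moreover have "colorable VH EH (k - 1) \<or> separating_set VH EH {x, y}"
    by (rule colorable_or_separating_pair[OF hypergraph_H \<open>x \<in> VH\<close> \<open>y \<in> VH\<close> xy(3) not_edge _ _ _ _ z_free])
      (use z \<open>z \<noteq> x\<close> \<open>z \<noteq> y\<close> k4 degree_H in auto)
  ultimately show False using H_not_colorable by blast
qed

lemma H_degree_eq_card_neighbours:
  assumes "3 \<le> k" "v \<in> VH"
  shows "card (neighbours EH v) = k - 1"
  using degree_eq_card_neighbours[of EH v] H_edges_ordinary[OF assms(1)] degree_H[OF assms(2)] by simp

lemma finite_neighbours_H: "finite (neighbours EH v)"
proof (rule finite_subset)
  show "neighbours EH v \<subseteq> VH"
    unfolding neighbours_def using hypergraph_edge_subset[OF hypergraph_H] by blast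
  show "finite VH" using hypergraph_H unfolding hypergraph_def by blast
qed

text \<open>Brooks' argument in \<open>H\<close>: two non-adjacent neighbours of a vertex would give a separating
  pair, so every closed neighbourhood is a clique and hence all of \<open>H\<close>, which has too many vertices.\<close>

lemma k_le_3: "k \<le> 3"
proof (rule ccontr)
  assume "\<not> k \<le> 3"
  then have k4: "4 \<le> k" by simp
  have ordinary: "\<And>e. e \<in> EH \<Longrightarrow> card e = 2" using H_edges_ordinary k4 by simp
  obtain z where z: "z \<in> VH" using VH_nonempty by blast
  let ?N = "neighbours EH z"
  have N_VH: "?N \<subseteq> VH" unfolding neighbours_def using hypergraph_edge_subset[OF hypergraph_H] by blast
  have clique: "y \<in> neighbours EH x" if "x \<in> ?N" "y \<in> ?N" "x \<noteq> y" for x y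
    using H_neighbours_adjacent[OF k4 z that] .
  have same_degree: "degree EH a = degree EH z" if "a \<in> ?N" for a
    using degree_H[OF z] degree_H[of a] that N_VH by auto
  have closed: "neighbours EH a \<subseteq> insert z ?N" if "a \<in> insert z ?N" for a
    by (rule clique_neighbourhood_closed[OF ordinary finite_neighbours_H clique same_degree that])
  have split: "\<forall>e\<in>EH. e \<subseteq> insert z ?N \<or> e \<subseteq> VH - insert z ?N"
    using hypergraph_edge_subset[OF hypergraph_H] closed by (intro neighbour_closed_split[OF ordinary]) auto
  have "z \<notin> ?N" using neighbours_irrefl[OF ordinary] by blast
  then have card: "card (insert z ?N) = k"
    using H_degree_eq_card_neighbours[OF _ z] k4 finite_neighbours_H by simp
  have "insert z ?N = VH" using H_connected[OF _ split] z N_VH by blast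
  then show False using card card_VH by simp
qed

lemma hyperwheel_if_k_eq_2:
  assumes "k = 2"
  shows "hyperwheel V E"
proof -
  have edges_in_VH: "\<forall>e\<in>EH. e \<subseteq> VH" using hypergraph_edge_subset[OF hypergraph_H] by blast
  have "EH \<noteq> {}"
  proof
    assume "EH = {}"
    have "is_coloring VH {} (k - 1) (\<lambda>_. 0)" using assms unfolding is_coloring_iff by auto
    then have "is_coloring VH EH (k - 1) (\<lambda>_. 0)" using \<open>EH = {}\<close> by (simp only:)
    then show False using H_not_colorable colorableI by blast
  qed
  then obtain e where e: "e \<in> EH" by blast
  have "colorable VH (EH - {e}) 1" using H_delete_edge_colorable[OF e] assms by simp
  then have "EH - {e} = {}" using edges_in_VH by (intro colorable_one_imp_no_edges) auto
  then have EH: "EH = {e}" using e by blast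
  have "e = VH"
  proof
    show "e \<subseteq> VH" using edges_in_VH e by blast
    show "VH \<subseteq> e"
    proof
      fix v assume "v \<in> VH"
      then obtain e' where "e' \<in> EH" "v \<in> e'" by (rule H_vertex_in_edge)
      then show "v \<in> e" using EH by blast
    qed
  qed
  have "E = insert e {{h, u} | u. u \<in> e}"
    using edges_decomposition unfolding EH \<open>e = VH\<close> by blast
  moreover have "2 \<le> card e" "finite e" using hypergraph_H e unfolding hypergraph_def
    by (auto intro: finite_subset)
  moreover have "h \<notin> e" "V = insert h e" using \<open>e = VH\<close> h_in_V by auto
  ultimately show ?thesis unfolding hyperwheel_def by blast
qed

lemma odd_wheel_if_k_eq_3:
  assumes "k = 3"
  shows "odd_wheel V E"
proof -
  have ordinary: "\<And>e. e \<in> EH \<Longrightarrow> card e = 2" using H_edges_ordinary assms by simp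
  have regular: "\<And>v. v \<in> VH \<Longrightarrow> card (neighbours EH v) = 2"
    using H_degree_eq_card_neighbours assms by simp
  have "finite VH" "\<forall>e\<in>EH. e \<subseteq> VH"
    using hypergraph_H hypergraph_edge_subset[OF hypergraph_H] unfolding hypergraph_def by blast+
  then obtain c where c: "distinct c" "3 \<le> length c" "set c = VH" "EH = cycle_edges c"
    using connected_two_regular_is_cycle[OF ordinary regular _ VH_nonempty _ H_connected] by blast
  have "odd (length c)"
  proof
    assume "even (length c)"
    then have "colorable (set c) (cycle_edges c) 2" by (rule even_cycle_colorable[OF c(1)])
    then show False using H_not_colorable assms c(3,4) by simp
  qed
  have "(\<lambda>v. {h, v}) ` VH = {{h, c ! i} | i. i < length c}"
    unfolding c(3)[symmetric] by (auto simp: in_set_conv_nth) (use nth_mem in blast)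
  then have "E = cycle_edges c \<union> {{h, c ! i} | i. i < length c}"
    using edges_decomposition unfolding c(4) by simp
  moreover have "h \<notin> set c" "V = insert h (set c)" using c(3) h_in_V by auto
  ultimately show ?thesis
    unfolding odd_wheel_def cycle_edges_def using c(1,2) \<open>odd (length c)\<close> by blast
qed

end

theorem lemma7:
  fixes V :: "'a set" and E :: "'a set set" and k :: nat
  assumes "k \<ge> 2"
    and "critical (k + 1) V E"
    and "card (high_vertices k V E) = 1"
  shows "(\<exists>S. card S = 2 \<and> separating_set V E S)
       \<or> (k = 2 \<and> hyperwheel V E)
       \<or> (k = 3 \<and> odd_wheel V E)"
proof (cases "\<exists>S. card S = 2 \<and> separating_set V E S")
  case False
  obtain h where "high_vertices k V E = {h}" using assms(3) by (rule card_1_singletonE)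
  then interpret one_high_vertex V E k h
    using single_high_vertex_degrees[OF assms(2)] assms(1,2) False by unfold_locales auto
  consider "k = 2" | "k = 3" using assms(1) k_le_3 by linarith
  then show ?thesis
    by cases (simp_all add: hyperwheel_if_k_eq_2 odd_wheel_if_k_eq_3)
qed (rule disjI1)

end
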